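(* The map sending $\Gamma\in F(L)$ of $x$-degree $3$ to the unique polynomial $P\in\mathbb{R}[X,Y]$ with $P(X,Y)=-P(Y,X)$ and $\partial_x(\Gamma)=l_P$ is a linear bijection from the $x$-degree-$3$ part of $F(L)$ onto $$\mathcal{P}=\{P\in\mathbb{R}[X,Y]:\ P(X,Y)=-P(Y,X),\ 2P(X,Y)=P(-X-Y,X)-P(-X-Y,Y)\}.$$
   Context: $A=\mathbb{R}\langle x,y\rangle$; $L\subset A$ the free Lie algebra on $x,y$; $\operatorname{ad}_y(l)=[y,l]$. For $P=\sum c_{i,j}X^iY^j\in\mathbb{R}[X,Y]$ set $l_P=\sum_{i,j}c_{i,j}[\operatorname{ad}_y^i(x),\operatorname{ad}_y^j(x)]\in L$; this gives a linear bijection between polynomials with $P(X,Y)=-P(Y,X)$ and the elements of $L$ of $x$-degree $2$. $\operatorname{tr}$ is the projection $A\to A/\operatorname{span}\{ab-ba\}$; $F(L)$ is the quotient of $L\otimes L$ by the span of $a\otimes b-b\otimes a$ and $a\otimes[b,c]-[a,b]\otimes c$, regarded inside $A/\operatorname{span}\{ab-ba\}$ via $a\otimes b\mapsto\operatorname{tr}(ab)$; its $x$-degree is the number of letters $x$. $\partial_x$ maps cyclic words by $\operatorname{tr}(a_1\cdots a_n)\mapsto\sum_{i:\,a_i=x}a_{i+1}\cdots a_n a_1\cdots a_{i-1}$. *)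

theory Defs
  imports Complex_Main
begin

datatype letter = LX | LY

text \<open>Elements of A: coefficient functions on words (finitely supported).\<close>
type_synonym ncpoly = "letter list \<Rightarrow> real"

definition Afin :: "ncpoly set" where
  "Afin = {f. finite {w. f w \<noteq> 0}}"

definition addA :: "ncpoly \<Rightarrow> ncpoly \<Rightarrow> ncpoly" where
  "addA f g = (\<lambda>w. f w + g w)"

definition subA :: "ncpoly \<Rightarrow> ncpoly \<Rightarrow> ncpoly" where
  "subA f g = (\<lambda>w. f w - g w)"

definition smulA :: "real \<Rightarrow> ncpoly \<Rightarrow> ncpoly" where
  "smulA c f = (\<lambda>w. c * f w)"

definition zeroA :: ncpoly where
  "zeroA = (\<lambda>w. 0)"

definition mulA :: "ncpoly \<Rightarrow> ncpoly \<Rightarrow> ncpoly" where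
  "mulA f g = (\<lambda>w. \<Sum>i\<in>{0..length w}. f (take i w) * g (drop i w))"

definition genA :: "letter \<Rightarrow> ncpoly" where
  "genA c = (\<lambda>w. if w = [c] then 1 else 0)"

definition brA :: "ncpoly \<Rightarrow> ncpoly \<Rightarrow> ncpoly" where
  "brA f g = subA (mulA f g) (mulA g f)"

inductive_set lspan :: "ncpoly set \<Rightarrow> ncpoly set" for S where
  lspan_zero: "zeroA \<in> lspan S"
| lspan_base: "s \<in> S \<Longrightarrow> s \<in> lspan S"
| lspan_add: "f \<in> lspan S \<Longrightarrow> g \<in> lspan S \<Longrightarrow> addA f g \<in> lspan S"
| lspan_smul: "f \<in> lspan S \<Longrightarrow> smulA c f \<in> lspan S"

text \<open>The free Lie algebra L: Lie subalgebra of A generated by x and y.\<close>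
inductive_set freeLie :: "ncpoly set" where
  fl_x: "genA LX \<in> freeLie"
| fl_y: "genA LY \<in> freeLie"
| fl_zero: "zeroA \<in> freeLie"
| fl_add: "f \<in> freeLie \<Longrightarrow> g \<in> freeLie \<Longrightarrow> addA f g \<in> freeLie"
| fl_smul: "f \<in> freeLie \<Longrightarrow> smulA c f \<in> freeLie"
| fl_br: "f \<in> freeLie \<Longrightarrow> g \<in> freeLie \<Longrightarrow> brA f g \<in> freeLie"

text \<open>The commutator subspace span{ab - ba}; A/comm is the space of cyclic words,
  and tr is the projection f \<mapsto> class of f modulo comm.\<close>
definition comm :: "ncpoly set" where
  "comm = lspan {subA (mulA a b) (mulA b a) | a b. a \<in> Afin \<and> b \<in> Afin}"

text \<open>Representatives (in A) of elements of F(L) \<subseteq> A/comm: F(L) is the image of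
  L \<otimes> L under a \<otimes> b \<mapsto> tr(ab), i.e. the span of the classes tr(ab), a,b \<in> L.\<close>
definition FLrep :: "ncpoly set" where
  "FLrep = {f \<in> Afin. \<exists>g \<in> lspan {mulA a b | a b. a \<in> freeLie \<and> b \<in> freeLie}.
                       subA f g \<in> comm}"

definition xhomog :: "nat \<Rightarrow> ncpoly \<Rightarrow> bool" where
  "xhomog d f \<longleftrightarrow> (\<forall>w. f w \<noteq> 0 \<longrightarrow> count_list w LX = d)"

text \<open>Representatives of the x-degree-3 part of F(L) (the degree-3 part of the graded
  space A/comm is represented by x-homogeneous elements of degree 3).\<close>
definition F3rep :: "ncpoly set" where
  "F3rep = {f \<in> FLrep. xhomog 3 f}"

text \<open>The cyclic derivative on representatives: the word p x s contributes the word s p,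
  i.e. tr(a1...an) \<mapsto> sum over i with ai = x of a(i+1)...an a1...a(i-1).\<close>
definition Dx :: "ncpoly \<Rightarrow> ncpoly" where
  "Dx f = (\<lambda>u. \<Sum>k\<in>{0..length u}. f (drop k u @ LX # take k u))"

text \<open>A polynomial in R[X,Y] is a finitely supported coefficient function (i,j) \<mapsto> c_{i,j}.\<close>
type_synonym bipoly = "nat \<times> nat \<Rightarrow> real"

definition supp2 :: "bipoly \<Rightarrow> (nat \<times> nat) set" where
  "supp2 P = {p. P p \<noteq> 0}"

definition Poly2 :: "bipoly set" where
  "Poly2 = {P. finite (supp2 P)}"

definition AntiPoly :: "bipoly set" where
  "AntiPoly = {P \<in> Poly2. \<forall>i j. P (i, j) = - P (j, i)}"

definition peval :: "bipoly \<Rightarrow> real \<Rightarrow> real \<Rightarrow> real" where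
  "peval P a b = (\<Sum>(i, j)\<in>supp2 P. P (i, j) * a ^ i * b ^ j)"

text \<open>The space \<P>; the polynomial identity 2P(X,Y) = P(-X-Y,X) - P(-X-Y,Y) is stated as
  an identity of polynomial functions on R^2 (equivalent, R being infinite).\<close>
definition PP :: "bipoly set" where
  "PP = {P \<in> AntiPoly. \<forall>a b :: real.
           2 * peval P a b = peval P (- a - b) a - peval P (- a - b) b}"

definition ady :: "nat \<Rightarrow> ncpoly" where
  "ady i = ((\<lambda>f. brA (genA LY) f) ^^ i) (genA LX)"

definition lP :: "bipoly \<Rightarrow> ncpoly" where
  "lP P = (\<lambda>w. \<Sum>(i, j)\<in>supp2 P. P (i, j) * brA (ady i) (ady j) w)"

definition Phi :: "ncpoly \<Rightarrow> bipoly" where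
  "Phi f = (THE P. P \<in> AntiPoly \<and> Dx f = lP P)"

end

theory Submission
  imports Defs "HOL-Computational_Algebra.Polynomial"
begin

text \<open>Identify the \<open>x\<close>-degree-\<open>k\<close> part of \<open>A\<close> with \<open>\<real>[t\<^sub>0, \<dots>, t\<^sub>k]\<close> through the commutative image
  \<open>y^a\<^sub>0 x \<cdots> x y^a\<^sub>k \<mapsto> t\<^sub>0^a\<^sub>0 \<cdots> t\<^sub>k^a\<^sub>k\<close>. Then \<open>ad\<^sub>y\<^sup>i(x)\<close> becomes \<open>(t\<^sub>0 - t\<^sub>1)^i\<close>, \<open>l\<^sub>P\<close> becomes
  \<open>2 P(t\<^sub>0 - t\<^sub>1, t\<^sub>1 - t\<^sub>2)\<close> for antisymmetric \<open>P\<close>, and \<open>\<partial>\<^sub>x\<close> of an element of \<open>x\<close>-degree \<open>n\<close>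
  becomes the sum of its values at the \<open>n\<close> cyclic shifts of the variables.

  The homogeneous components of a Lie element are translation invariant (in positive
  \<open>x\<close>-degree) and antisymmetric under the reversal \<open>t\<^sub>m \<mapsto> -t\<^bsub>k-m\<^esub>\<close>. Both properties pass to
  \<open>\<partial>\<^sub>x(a b)\<close> for Lie elements \<open>a, b\<close>, and an element of \<open>x\<close>-degree 2 with both properties
  is \<open>l\<^sub>P\<close> for a unique antisymmetric \<open>P\<close>. Invariance of \<open>\<partial>\<^sub>x \<Gamma>\<close> under cyclic shifts is exactly
  the identity defining \<open>\<P>\<close>. The map is injective by Euler's formula
  \<open>3 \<Gamma> \<equiv> x \<partial>\<^sub>x \<Gamma>\<close> modulo commutators, and surjective because \<open>\<partial>\<^sub>x tr(x l\<^sub>P) = 3 l\<^sub>P\<close> for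
  \<open>P \<in> \<P>\<close>.\<close>

section \<open>Finitely supported elements of \<open>A\<close>\<close>

definition wordA :: "letter list \<Rightarrow> ncpoly" where
  "wordA z = (\<lambda>w. if w = z then 1 else 0)"

definition suppA :: "ncpoly \<Rightarrow> letter list set" where
  "suppA u = {w. u w \<noteq> 0}"

abbreviation xdeg :: "letter list \<Rightarrow> nat" where
  "xdeg w \<equiv> count_list w LX"

lemma genA_eq_wordA: "genA c = wordA [c]"
  by (simp add: genA_def wordA_def)

lemma Afin_iff_finite_suppA: "u \<in> Afin \<longleftrightarrow> finite (suppA u)"
  by (simp add: Afin_def suppA_def)

lemma suppA_empty_iff: "suppA u = {} \<longleftrightarrow> u = zeroA"
  by (auto simp: suppA_def zeroA_def fun_eq_iff)

lemma Afin_sum [intro]: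
  assumes "finite S" "\<And>a. a \<in> S \<Longrightarrow> F a \<in> Afin"
  shows "(\<lambda>w. \<Sum>a\<in>S. F a w) \<in> Afin"
proof -
  have "suppA (\<lambda>w. \<Sum>a\<in>S. F a w) \<subseteq> (\<Union>a\<in>S. suppA (F a))"
    by (auto simp: suppA_def elim: sum.not_neutral_contains_not_neutral)
  then show ?thesis
    using assms by (auto simp: Afin_iff_finite_suppA intro: finite_subset)
qed

lemma Afin_scale [intro]: "f \<in> Afin \<Longrightarrow> (\<lambda>w. c * f w) \<in> Afin"
  unfolding Afin_def by (auto intro: finite_subset[of _ "{w. f w \<noteq> 0}"])

lemma Afin_lincomb [intro]: "f \<in> Afin \<Longrightarrow> g \<in> Afin \<Longrightarrow> (\<lambda>w. a * f w + b * g w) \<in> Afin"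
  unfolding Afin_def by (auto intro: finite_subset[of _ "{w. f w \<noteq> 0} \<union> {w. g w \<noteq> 0}"])

lemma Afin_smulA [intro]: "f \<in> Afin \<Longrightarrow> smulA c f \<in> Afin"
  unfolding smulA_def by (rule Afin_scale)

lemma Afin_addA [intro]: "f \<in> Afin \<Longrightarrow> g \<in> Afin \<Longrightarrow> addA f g \<in> Afin"
  using Afin_lincomb[of f g 1 1] by (simp add: addA_def)

lemma Afin_subA [intro]: "f \<in> Afin \<Longrightarrow> g \<in> Afin \<Longrightarrow> subA f g \<in> Afin"
  using Afin_lincomb[of f g 1 "-1"] by (simp add: subA_def)

lemma Afin_zeroA [intro]: "zeroA \<in> Afin"
  by (simp add: Afin_def zeroA_def)

lemma Afin_wordA [intro]: "wordA z \<in> Afin"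
  by (simp add: Afin_def wordA_def)

lemma Afin_genA [intro]: "genA c \<in> Afin"
  by (simp add: genA_eq_wordA Afin_wordA)

lemma expansion_superset:
  assumes "finite S" "suppA u \<subseteq> S"
  shows "u z = (\<Sum>a\<in>S. u a * wordA a z)"
proof -
  have "(\<Sum>a\<in>S. u a * wordA a z) = (if z \<in> S then u z else 0)"
    using assms(1) by (simp add: wordA_def if_distrib sum.delta' cong: if_cong)
  also have "\<dots> = u z" using assms(2) by (auto simp: suppA_def)
  finally show ?thesis by simp
qed

lemma Afin_expansion: "u \<in> Afin \<Longrightarrow> u = (\<lambda>w. \<Sum>a\<in>suppA u. u a * wordA a w)"
  by (rule ext, rule expansion_superset) (auto simp: Afin_iff_finite_suppA)

lemma mulA_wordA: "mulA (wordA a) (wordA b) = wordA (a @ b)"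
proof
  fix w
  have "mulA (wordA a) (wordA b) w = (\<Sum>n\<in>{0..length w}. if n = length a \<and> w = a @ b then 1 else 0)"
    unfolding mulA_def wordA_def
    by (rule sum.cong) (auto simp: append_eq_conv_conj)
  also have "\<dots> = wordA (a @ b) w"
    by (simp add: wordA_def sum.delta' cong: conj_cong)
  finally show "mulA (wordA a) (wordA b) w = wordA (a @ b) w" .
qed

lemma mulA_sum_left: "mulA (\<lambda>w. \<Sum>a\<in>S. F a w) g = (\<lambda>w. \<Sum>a\<in>S. mulA (F a) g w)"
  unfolding mulA_def by (rule ext) (simp add: sum_distrib_right sum.swap[of _ _ S])

lemma mulA_sum_right: "mulA f (\<lambda>w. \<Sum>a\<in>S. F a w) = (\<lambda>w. \<Sum>a\<in>S. mulA f (F a) w)"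
  unfolding mulA_def by (rule ext) (simp add: sum_distrib_left sum.swap[of _ _ S])

lemma mulA_scale_left: "mulA (\<lambda>w. c * f w) g = (\<lambda>w. c * mulA f g w)"
  unfolding mulA_def by (rule ext) (simp add: sum_distrib_left mult_ac)

lemma mulA_scale_right: "mulA f (\<lambda>w. c * g w) = (\<lambda>w. c * mulA f g w)"
  unfolding mulA_def by (rule ext) (simp add: sum_distrib_left mult_ac)

lemma mulA_zero_right: "mulA f zeroA = zeroA"
  by (simp add: mulA_def zeroA_def)

lemma mulA_expansion:
  assumes "u \<in> Afin" "v \<in> Afin"
  shows "mulA u v = (\<lambda>w. \<Sum>(a, b)\<in>suppA u \<times> suppA v. u a * v b * wordA (a @ b) w)"
proof -
  have "mulA u v = mulA (\<lambda>w. \<Sum>a\<in>suppA u. u a * wordA a w) (\<lambda>w. \<Sum>b\<in>suppA v. v b * wordA b w)"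
    using Afin_expansion[OF assms(1)] Afin_expansion[OF assms(2)] by simp
  also have "\<dots> = (\<lambda>w. \<Sum>a\<in>suppA u. \<Sum>b\<in>suppA v. u a * v b * wordA (a @ b) w)"
    by (simp add: mulA_sum_left mulA_sum_right mulA_scale_left mulA_scale_right mulA_wordA mult_ac)
  finally show ?thesis
    by (simp add: sum.cartesian_product)
qed

lemma suppA_mulA: "suppA (mulA u v) \<subseteq> (\<lambda>(a, b). a @ b) ` (suppA u \<times> suppA v)"
proof
  fix w assume "w \<in> suppA (mulA u v)"
  then obtain n where "u (take n w) * v (drop n w) \<noteq> 0"
    unfolding suppA_def mulA_def by (auto elim: sum.not_neutral_contains_not_neutral)
  then show "w \<in> (\<lambda>(a, b). a @ b) ` (suppA u \<times> suppA v)"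
    unfolding suppA_def image_iff by (intro bexI[of _ "(take n w, drop n w)"]) auto
qed

lemma Afin_mulA [intro]: "f \<in> Afin \<Longrightarrow> g \<in> Afin \<Longrightarrow> mulA f g \<in> Afin"
  unfolding Afin_iff_finite_suppA using suppA_mulA by (meson finite_SigmaI finite_imageI finite_subset)

lemma Afin_brA [intro]: "f \<in> Afin \<Longrightarrow> g \<in> Afin \<Longrightarrow> brA f g \<in> Afin"
  unfolding brA_def by auto

lemma freeLie_Afin: "f \<in> freeLie \<Longrightarrow> f \<in> Afin"
  by (induction rule: freeLie.induct) auto

lemma freeLie_sum:
  assumes "finite S" "\<And>a. a \<in> S \<Longrightarrow> F a \<in> freeLie"
  shows "(\<lambda>w. \<Sum>a\<in>S. F a w) \<in> freeLie"
  using assms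
proof (induction S rule: finite_induct)
  case empty
  then show ?case using fl_zero by (simp add: zeroA_def)
next
  case (insert a S)
  then have "addA (F a) (\<lambda>w. \<Sum>a\<in>S. F a w) \<in> freeLie" by (intro fl_add) auto
  then show ?case using insert by (simp add: addA_def)
qed

lemma lspan_scale: "f \<in> lspan S \<Longrightarrow> (\<lambda>w. c * f w) \<in> lspan S"
  using lspan_smul[of f S c] by (simp add: smulA_def)

lemma lspan_sum:
  assumes "finite I" "\<And>a. a \<in> I \<Longrightarrow> F a \<in> lspan S"
  shows "(\<lambda>w. \<Sum>a\<in>I. F a w) \<in> lspan S"
  using assms
proof (induction I rule: finite_induct)
  case empty
  then show ?case using lspan_zero[of S] by (simp add: zeroA_def)
next
  case (insert a I)
  then have "addA (F a) (\<lambda>w. \<Sum>a\<in>I. F a w) \<in> lspan S" by (intro lspan_add) auto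
  then show ?case using insert by (simp add: addA_def)
qed

lemma lspan_induct_lincomb [consumes 1, case_names zero base lincomb]:
  assumes "g \<in> lspan S" "Q zeroA" "\<And>s. s \<in> S \<Longrightarrow> Q s"
    "\<And>f g a b. Q f \<Longrightarrow> Q g \<Longrightarrow> Q (\<lambda>w. a * f w + b * g w)"
  shows "Q g"
  using assms(1)
proof (induction rule: lspan.induct)
  case (lspan_add f g)
  then show ?case using assms(4)[of f g 1 1] by (simp add: addA_def)
next
  case (lspan_smul f c)
  then show ?case using assms(4)[of f f c 0] by (simp add: smulA_def)
qed (use assms in auto)

lemma lspan_lincomb:
  "f \<in> lspan S \<Longrightarrow> g \<in> lspan S \<Longrightarrow> addA (smulA a f) (smulA b g) \<in> lspan S"
  by (intro lspan_add lspan_smul)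

lemma commutator_in_comm: "a \<in> Afin \<Longrightarrow> b \<in> Afin \<Longrightarrow> subA (mulA a b) (mulA b a) \<in> comm"
  unfolding comm_def by (rule lspan_base) blast

lemma zeroA_in_comm: "zeroA \<in> comm"
  unfolding comm_def by (rule lspan_zero)

section \<open>The commutative image\<close>

fun word_mon :: "(nat \<Rightarrow> 'a::comm_ring_1) \<Rightarrow> letter list \<Rightarrow> 'a" where
  "word_mon t [] = 1"
| "word_mon t (LY # w) = t 0 * word_mon t w"
| "word_mon t (LX # w) = word_mon (\<lambda>i. t (Suc i)) w"

text \<open>The commutative image of \<open>A\<close>: the word \<open>y^a\<^sub>0 x y^a\<^sub>1 \<dots> x y^a\<^sub>k\<close> is sent to the
  monomial \<open>t\<^sub>0^a\<^sub>0 \<cdots> t\<^sub>k^a\<^sub>k\<close>. On elements of \<open>x\<close>-degree \<open>k\<close> it is injective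
  (\<open>evalA_inject\<close>), which identifies the \<open>x\<close>-degree-\<open>k\<close> part of \<open>A\<close> with \<open>\<real>[t\<^sub>0, \<dots>, t\<^sub>k]\<close>.\<close>
definition evalA :: "ncpoly \<Rightarrow> (nat \<Rightarrow> real) \<Rightarrow> real" where
  "evalA u t = (\<Sum>w\<in>suppA u. u w * word_mon t w)"

definition shift :: "nat \<Rightarrow> (nat \<Rightarrow> 'a) \<Rightarrow> nat \<Rightarrow> 'a" where
  "shift i t = (\<lambda>m. t (m + i))"

lemma shift_0 [simp]: "shift 0 t = t"
  by (simp add: shift_def)

lemma shift_translate: "shift i (\<lambda>m. t m + s) = (\<lambda>m. shift i t m + s)"
  by (simp add: shift_def)

lemma word_mon_append: "word_mon t (v @ w) = word_mon t v * word_mon (shift (xdeg v) t) w"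
proof (induction v arbitrary: t)
  case (Cons c v)
  show ?case
  proof (cases c)
    case LX
    then show ?thesis using Cons.IH[of "\<lambda>i. t (Suc i)"] by (simp add: shift_def)
  next
    case LY
    then show ?thesis using Cons.IH[of t] by simp
  qed
qed simp

lemma word_mon_cong: "(\<And>i. i \<le> xdeg w \<Longrightarrow> t i = t' i) \<Longrightarrow> word_mon t w = word_mon t' w"
proof (induction w arbitrary: t t')
  case (Cons c w)
  show ?case
  proof (cases c)
    case LX
    then show ?thesis using Cons.prems by (auto intro!: Cons.IH)
  next
    case LY
    then show ?thesis using Cons.prems Cons.IH[of t t'] by force
  qed
qed simp

lemma word_mon_replicate_LY: "word_mon t (replicate n LY @ w) = t 0 ^ n * word_mon t w"
  by (induction n) (simp_all add: mult_ac)

lemma evalA_superset: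
  assumes "finite S" "suppA u \<subseteq> S"
  shows "evalA u t = (\<Sum>w\<in>S. u w * word_mon t w)"
  unfolding evalA_def
  by (rule sum.mono_neutral_left) (use assms in \<open>auto simp: suppA_def\<close>)

lemma evalA_sum:
  assumes "finite S" "\<And>a. a \<in> S \<Longrightarrow> F a \<in> Afin"
  shows "evalA (\<lambda>w. \<Sum>a\<in>S. F a w) t = (\<Sum>a\<in>S. evalA (F a) t)"
proof -
  define U where "U = (\<Union>a\<in>S. suppA (F a))"
  have U: "finite U" using assms by (auto simp: U_def Afin_iff_finite_suppA)
  have "suppA (\<lambda>w. \<Sum>a\<in>S. F a w) \<subseteq> U"
    by (auto simp: U_def suppA_def elim: sum.not_neutral_contains_not_neutral)
  then have "evalA (\<lambda>w. \<Sum>a\<in>S. F a w) t = (\<Sum>a\<in>S. \<Sum>w\<in>U. F a w * word_mon t w)"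
    by (simp add: evalA_superset[OF U] sum_distrib_right sum.swap[of _ U])
  also have "\<dots> = (\<Sum>a\<in>S. evalA (F a) t)"
    by (rule sum.cong[OF refl], rule evalA_superset[symmetric, OF U]) (auto simp: U_def)
  finally show ?thesis .
qed

lemma evalA_lincomb:
  assumes "f \<in> Afin" "g \<in> Afin"
  shows "evalA (\<lambda>w. a * f w + b * g w) t = a * evalA f t + b * evalA g t"
proof -
  define U where "U = suppA f \<union> suppA g"
  have U: "finite U" using assms by (auto simp: U_def Afin_iff_finite_suppA)
  have "evalA (\<lambda>w. a * f w + b * g w) t = (\<Sum>w\<in>U. (a * f w + b * g w) * word_mon t w)"
    by (rule evalA_superset[OF U]) (auto simp: U_def suppA_def)
  also have "\<dots> = a * (\<Sum>w\<in>U. f w * word_mon t w) + b * (\<Sum>w\<in>U. g w * word_mon t w)"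
    by (simp add: algebra_simps sum.distrib sum_distrib_left)
  also have "\<dots> = a * evalA f t + b * evalA g t"
    using evalA_superset[OF U, of f t] evalA_superset[OF U, of g t] by (simp add: U_def)
  finally show ?thesis .
qed

lemma evalA_subA: "f \<in> Afin \<Longrightarrow> g \<in> Afin \<Longrightarrow> evalA (subA f g) t = evalA f t - evalA g t"
  using evalA_lincomb[of f g 1 "-1" t] by (simp add: subA_def)

lemma evalA_scale: "evalA (\<lambda>w. c * f w) t = c * evalA f t"
proof (cases "c = 0")
  case False
  then have "suppA (\<lambda>w. c * f w) = suppA f" by (auto simp: suppA_def)
  then show ?thesis by (simp add: evalA_def sum_distrib_left mult_ac)
qed (simp add: evalA_def suppA_def)

lemma evalA_smulA: "evalA (smulA c f) t = c * evalA f t"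
  unfolding smulA_def by (rule evalA_scale)

lemma evalA_zeroA [simp]: "evalA zeroA t = 0"
  by (simp add: evalA_def zeroA_def suppA_def)

lemma evalA_wordA: "evalA (wordA z) t = word_mon t z"
  by (subst evalA_superset[of "{z}"]) (auto simp: suppA_def wordA_def)

lemma evalA_x [simp]: "evalA (genA LX) t = 1"
  by (simp add: genA_eq_wordA evalA_wordA)

lemma evalA_y [simp]: "evalA (genA LY) t = t 0"
  by (simp add: genA_eq_wordA evalA_wordA)

lemma evalA_cong:
  assumes "xhomog k u" "\<And>m. m \<le> k \<Longrightarrow> t m = t' m"
  shows "evalA u t = evalA u t'"
  unfolding evalA_def
proof (rule sum.cong[OF refl])
  fix w assume "w \<in> suppA u"
  then have "xdeg w = k" using assms(1) by (auto simp: suppA_def xhomog_def)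
  then show "u w * word_mon t w = u w * word_mon t' w" using assms(2) by (metis word_mon_cong)
qed

lemma evalA_mulA:
  assumes "u \<in> Afin" "v \<in> Afin" "xhomog i u"
  shows "evalA (mulA u v) t = evalA u t * evalA v (shift i t)"
proof -
  let ?S = "suppA u \<times> suppA v"
  have fin: "finite ?S" using assms by (auto simp: Afin_iff_finite_suppA)
  have "evalA (mulA u v) t = (\<Sum>p\<in>?S. evalA (\<lambda>w. u (fst p) * v (snd p) * wordA (fst p @ snd p) w) t)"
    unfolding mulA_expansion[OF assms(1,2)] split_def by (rule evalA_sum[OF fin]) auto
  also have "\<dots> = (\<Sum>p\<in>?S. (u (fst p) * word_mon t (fst p)) * (v (snd p) * word_mon (shift i t) (snd p)))"
  proof (rule sum.cong[OF refl])
    fix p assume "p \<in> ?S"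
    then have "xdeg (fst p) = i" using assms(3) by (auto simp: suppA_def xhomog_def)
    then show "evalA (\<lambda>w. u (fst p) * v (snd p) * wordA (fst p @ snd p) w) t
        = (u (fst p) * word_mon t (fst p)) * (v (snd p) * word_mon (shift i t) (snd p))"
      by (simp add: evalA_scale evalA_wordA word_mon_append)
  qed
  also have "\<dots> = evalA u t * evalA v (shift i t)"
    by (simp add: evalA_def sum_product sum.cartesian_product split_def)
  finally show ?thesis .
qed

section \<open>The cyclic derivative\<close>

lemma Dx_sum: "Dx (\<lambda>w. \<Sum>a\<in>S. F a w) = (\<lambda>u. \<Sum>a\<in>S. Dx (F a) u)"
  unfolding Dx_def by (rule ext) (rule sum.swap)

lemma Dx_scale: "Dx (\<lambda>w. c * f w) = (\<lambda>u. c * Dx f u)"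
  unfolding Dx_def by (rule ext) (simp add: sum_distrib_left)

lemma Dx_addA: "Dx (addA f g) = addA (Dx f) (Dx g)"
  unfolding Dx_def addA_def by (rule ext) (simp add: sum.distrib)

lemma Dx_subA: "Dx (subA f g) = subA (Dx f) (Dx g)"
  unfolding Dx_def subA_def by (rule ext) (simp add: sum_subtractf)

lemma Dx_smulA: "Dx (smulA c f) = smulA c (Dx f)"
  unfolding smulA_def by (rule Dx_scale)

lemma Dx_lincomb: "Dx (\<lambda>w. a * f w + b * g w) = (\<lambda>u. a * Dx f u + b * Dx g u)"
  unfolding Dx_def by (rule ext) (simp add: sum.distrib sum_distrib_left)

lemma Dx_zeroA [simp]: "Dx zeroA = zeroA"
  unfolding Dx_def zeroA_def by simp

definition x_splits :: "letter list \<Rightarrow> (letter list \<times> letter list) set" where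
  "x_splits z = {(p, s). p @ LX # s = z}"

lemma x_splits_append:
  "x_splits (v @ w) = (\<lambda>(p, s). (p, s @ w)) ` x_splits v \<union> (\<lambda>(p, s). (v @ p, s)) ` x_splits w"
  by (auto simp: x_splits_def append_eq_append_conv2 Cons_eq_append_conv image_iff)

lemma x_splits_single: "x_splits [c] = (if c = LX then {([], [])} else {})"
  by (auto simp: x_splits_def append_eq_Cons_conv)

lemma x_splits_Cons:
  "x_splits (c # z) = (if c = LX then {([], z)} else {}) \<union> (\<lambda>(p, s). (c # p, s)) ` x_splits z"
  using x_splits_append[of "[c]" z] by (simp add: x_splits_single)

lemma finite_x_splits [simp]: "finite (x_splits z)"
  by (induction z) (simp_all add: x_splits_Cons, simp add: x_splits_def)

lemma sum_x_splits_append: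
  "(\<Sum>q\<in>x_splits (v @ w). g (snd q @ fst q))
     = (\<Sum>q\<in>x_splits v. g (snd q @ w @ fst q)) + (\<Sum>q\<in>x_splits w. g (snd q @ v @ fst q))"
proof -
  have disjoint: "(\<lambda>(p, s). (p, s @ w)) ` x_splits v \<inter> (\<lambda>(p, s). (v @ p, s)) ` x_splits w = {}"
    by (auto simp: x_splits_def)
  have inj: "inj_on (\<lambda>q. (fst q, snd q @ w)) (x_splits v)" "inj_on (\<lambda>q. (v @ fst q, snd q)) (x_splits w)"
    by (auto simp: inj_on_def)
  show ?thesis
    unfolding x_splits_append
      sum.union_disjoint[OF finite_imageI finite_imageI disjoint, OF finite_x_splits finite_x_splits]
    by (simp add: sum.reindex[OF inj(1)] sum.reindex[OF inj(2)] split_def)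
qed

lemma sum_x_splits_xdeg: "(\<Sum>q\<in>x_splits z. g (xdeg (fst q))) = (\<Sum>j<xdeg z. (g j :: 'a::comm_monoid_add))"
proof (induction z arbitrary: g)
  case Nil
  then show ?case by (simp add: x_splits_def)
next
  case (Cons c z)
  have inj: "inj_on (\<lambda>(p, s). (c # p, s)) (x_splits z)" by (auto simp: inj_on_def)
  have shifted: "(\<Sum>q\<in>(\<lambda>(p, s). (c # p, s)) ` x_splits z. g (xdeg (fst q)))
      = (\<Sum>q\<in>x_splits z. g (xdeg (c # fst q)))"
    by (subst sum.reindex[OF inj]) (simp add: split_def)
  show ?case
  proof (cases c)
    case LX
    have "([], z) \<notin> (\<lambda>(p, s). (LX # p, s)) ` x_splits z" by auto
    then have "(\<Sum>q\<in>x_splits (c # z). g (xdeg (fst q))) = g 0 + (\<Sum>j<xdeg z. g (Suc j))"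
      using shifted LX Cons.IH[of "\<lambda>j. g (Suc j)"] by (simp add: x_splits_Cons)
    then show ?thesis using LX by (simp del: sum.lessThan_Suc add: sum.lessThan_Suc_shift)
  next
    case LY
    then show ?thesis using shifted Cons.IH[of g] by (simp add: x_splits_Cons)
  qed
qed

lemma card_x_splits: "card (x_splits z) = xdeg z"
  using sum_x_splits_xdeg[of "\<lambda>_. 1::nat" z] by simp

lemma Dx_wordA: "Dx (wordA z) = (\<lambda>u. \<Sum>q\<in>x_splits z. wordA (snd q @ fst q) u)"
proof
  fix u
  define S where "S = {k\<in>{0..length u}. (drop k u, take k u) \<in> x_splits z}"
  define T where "T = {q\<in>x_splits z. snd q @ fst q = u}"
  have "Dx (wordA z) u = (\<Sum>k\<in>S. 1)"
    unfolding Dx_def wordA_def S_def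
    by (subst sum.inter_filter) (auto simp: x_splits_def intro!: sum.cong)
  also have "\<dots> = (\<Sum>q\<in>T. 1)"
    by (rule sum.reindex_bij_witness[where i = "\<lambda>q. length (snd q)" and j = "\<lambda>k. (drop k u, take k u)"])
      (auto simp: S_def T_def)
  also have "\<dots> = (\<Sum>q\<in>x_splits z. wordA (snd q @ fst q) u)"
    unfolding T_def wordA_def by (subst sum.inter_filter) (auto intro!: sum.cong)
  finally show "Dx (wordA z) u = (\<Sum>q\<in>x_splits z. wordA (snd q @ fst q) u)" .
qed

lemma Dx_expansion: "h \<in> Afin \<Longrightarrow> Dx h = (\<lambda>u. \<Sum>a\<in>suppA h. h a * Dx (wordA a) u)"
  by (subst Afin_expansion) (simp_all add: Dx_sum Dx_scale)

lemma Afin_Dx_wordA: "Dx (wordA z) \<in> Afin"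
  unfolding Dx_wordA by (rule Afin_sum) auto

lemma Afin_Dx [intro]:
  assumes "h \<in> Afin"
  shows "Dx h \<in> Afin"
proof -
  have "finite (suppA h)" using assms by (simp add: Afin_iff_finite_suppA)
  then show ?thesis
    by (subst Dx_expansion[OF assms]) (intro Afin_sum Afin_scale Afin_Dx_wordA)
qed

lemma xdeg_drop_take: "xdeg (drop k u) + xdeg (take k u) = xdeg u"
  by (metis add.commute append_take_drop_id count_list_append)

lemma xhomog_Dx: "xhomog (Suc k) h \<Longrightarrow> xhomog k (Dx h)"
  unfolding xhomog_def
proof (intro allI impI)
  fix u assume h: "\<forall>w. h w \<noteq> 0 \<longrightarrow> xdeg w = Suc k" and "Dx h u \<noteq> 0"
  then obtain j where "h (drop j u @ LX # take j u) \<noteq> 0"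
    unfolding Dx_def by (auto elim: sum.not_neutral_contains_not_neutral)
  then show "xdeg u = k" using h xdeg_drop_take[of j u] by fastforce
qed

lemma Dx_wordA_append_commute: "Dx (wordA (v @ w)) = Dx (wordA (w @ v))"
  unfolding Dx_wordA by (rule ext) (simp add: sum_x_splits_append[where g = "\<lambda>z. wordA z _"])

lemma Dx_mulA_commute:
  assumes "a \<in> Afin" "b \<in> Afin"
  shows "Dx (mulA a b) = Dx (mulA b a)"
proof -
  have "Dx (mulA a b) = (\<lambda>u. \<Sum>(p, q)\<in>suppA a \<times> suppA b. a p * b q * Dx (wordA (q @ p)) u)"
    unfolding mulA_expansion[OF assms] Dx_sum split_def
    by (simp add: Dx_scale Dx_wordA_append_commute)
  also have "\<dots> = (\<lambda>u. \<Sum>(q, p)\<in>suppA b \<times> suppA a. b q * a p * Dx (wordA (q @ p)) u)"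
    by (rule ext, rule sum.reindex_bij_witness[where i = prod.swap and j = prod.swap]) auto
  also have "\<dots> = Dx (mulA b a)"
    unfolding mulA_expansion[OF assms(2,1)] Dx_sum split_def by (simp add: Dx_scale)
  finally show ?thesis .
qed

lemma Dx_brA: "a \<in> Afin \<Longrightarrow> b \<in> Afin \<Longrightarrow> Dx (brA a b) = zeroA"
  unfolding brA_def Dx_subA by (simp add: Dx_mulA_commute subA_def zeroA_def)

lemma Dx_comm: "h \<in> comm \<Longrightarrow> Dx h = zeroA"
  unfolding comm_def
proof (induction rule: lspan.induct)
  case (lspan_base s)
  then show ?case using Dx_brA by (auto simp: brA_def)
next
  case (lspan_add f g)
  then show ?case by (simp only: Dx_addA) (simp add: addA_def zeroA_def)
next
  case (lspan_smul f c)
  then show ?case by (simp only: Dx_smulA) (simp add: smulA_def zeroA_def)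
qed simp

lemma Dx_eq_if_comm: "subA f g \<in> comm \<Longrightarrow> Dx f = Dx g"
  using Dx_comm[of "subA f g"] unfolding Dx_subA by (simp add: subA_def zeroA_def fun_eq_iff)

definition rot :: "nat \<Rightarrow> nat \<Rightarrow> (nat \<Rightarrow> 'a) \<Rightarrow> nat \<Rightarrow> 'a" where
  "rot n j t = (\<lambda>m. t ((m + j) mod n))"

lemma rot_rot: "rot n i (rot n j t) = rot n (i + j) t"
  by (simp add: rot_def mod_add_left_eq add.assoc)

lemma rot_self: "rot n n t = rot n 0 t"
  by (simp add: rot_def)

lemma word_mon_rotate:
  assumes "xdeg (p @ LX # s) = n"
  shows "word_mon t (s @ p) = word_mon (rot n (n - 1 - xdeg p) t) (p @ LX # s)"
proof -
  let ?T = "rot n (n - 1 - xdeg p) t"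
  have s: "xdeg s = n - 1 - xdeg p" "xdeg p < n" using assms by auto
  have "word_mon ?T p = word_mon (shift (xdeg s) t) p"
    by (rule word_mon_cong) (use s in \<open>simp add: rot_def shift_def\<close>)
  moreover have "word_mon (shift (Suc (xdeg p)) ?T) s = word_mon t s"
    by (rule word_mon_cong) (use s in \<open>simp add: rot_def shift_def\<close>)
  ultimately show ?thesis
    by (simp add: word_mon_append shift_def mult.commute)
qed

lemma evalA_Dx_wordA: "evalA (Dx (wordA a)) t = (\<Sum>q\<in>x_splits a. word_mon t (snd q @ fst q))"
  unfolding Dx_wordA by (subst evalA_sum) (auto simp: evalA_wordA)

lemma evalA_Dx:
  assumes "h \<in> Afin" "xhomog n h"
  shows "evalA (Dx h) t = (\<Sum>j<n. evalA h (rot n j t))"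
proof -
  have fin: "finite (suppA h)" using assms(1) by (simp add: Afin_iff_finite_suppA)
  have "evalA (Dx h) t = (\<Sum>a\<in>suppA h. h a * (\<Sum>q\<in>x_splits a. word_mon t (snd q @ fst q)))"
    unfolding Dx_expansion[OF assms(1)]
    by (subst evalA_sum[OF fin]) (auto simp: evalA_scale evalA_Dx_wordA intro: Afin_scale Afin_Dx_wordA)
  also have "\<dots> = (\<Sum>a\<in>suppA h. h a * (\<Sum>j<n. word_mon (rot n j t) a))"
  proof (rule sum.cong[OF refl])
    fix a assume "a \<in> suppA h"
    then have n: "xdeg a = n" using assms(2) by (auto simp: suppA_def xhomog_def)
    have "(\<Sum>q\<in>x_splits a. word_mon t (snd q @ fst q))
        = (\<Sum>q\<in>x_splits a. word_mon (rot n (n - 1 - xdeg (fst q)) t) a)"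
    proof (rule sum.cong[OF refl])
      fix q assume "q \<in> x_splits a"
      then have "fst q @ LX # snd q = a" by (auto simp: x_splits_def)
      then show "word_mon t (snd q @ fst q) = word_mon (rot n (n - 1 - xdeg (fst q)) t) a"
        using word_mon_rotate[of "fst q" "snd q" n t] n by simp
    qed
    also have "\<dots> = (\<Sum>j<n. word_mon (rot n (n - Suc j) t) a)"
      using sum_x_splits_xdeg[of "\<lambda>j. word_mon (rot n (n - Suc j) t) a" a] n by simp
    also have "\<dots> = (\<Sum>j<n. word_mon (rot n j t) a)"
      by (rule sum.nat_diff_reindex)
    finally show "h a * (\<Sum>q\<in>x_splits a. word_mon t (snd q @ fst q)) = h a * (\<Sum>j<n. word_mon (rot n j t) a)"
      by simp
  qed
  also have "\<dots> = (\<Sum>j<n. evalA h (rot n j t))"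
    by (simp add: evalA_def sum_distrib_left sum.swap[of _ "suppA h"] mult_ac)
  finally show ?thesis .
qed

lemma evalA_Dx_rot:
  assumes "h \<in> Afin" "xhomog n h"
  shows "evalA (Dx h) (rot n 1 t) = evalA (Dx h) t"
proof -
  have "(\<Sum>j<n. evalA h (rot n (Suc j) t)) = (\<Sum>j<n. evalA h (rot n j t))"
    using sum.lessThan_Suc_shift[of "\<lambda>j. evalA h (rot n j t)" n] by (simp add: rot_self)
  then show ?thesis
    by (simp add: evalA_Dx[OF assms] rot_rot)
qed

text \<open>Euler's formula for cyclic words: \<open>x \<partial>\<^sub>x(p x s)\<close> has one term \<open>x s p\<close> for each of the
  \<open>k\<close> letters \<open>x\<close> of the word, and \<open>p x s - x s p = [p, x s]\<close> is a commutator.\<close>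
lemma Euler_comm:
  assumes "h \<in> Afin" "xhomog k h"
  shows "subA (smulA (real k) h) (mulA (genA LX) (Dx h)) \<in> comm"
proof -
  have fin: "finite (suppA h)" using assms(1) by (simp add: Afin_iff_finite_suppA)
  define G where
    "G q = subA (mulA (wordA (fst q)) (wordA (LX # snd q))) (mulA (wordA (LX # snd q)) (wordA (fst q)))" for q
  have "subA (smulA (real k) h) (mulA (genA LX) (Dx h)) = (\<lambda>w. \<Sum>a\<in>suppA h. h a * (\<Sum>q\<in>x_splits a. G q w))"
  proof
    fix w
    have e1: "smulA (real k) h w = (\<Sum>a\<in>suppA h. h a * (real k * wordA a w))"
      unfolding smulA_def
      by (subst expansion_superset[OF fin order_refl]) (simp add: sum_distrib_left mult_ac)
    have e2: "mulA (genA LX) (Dx h) w = (\<Sum>a\<in>suppA h. h a * (\<Sum>q\<in>x_splits a. wordA (LX # snd q @ fst q) w))"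
      unfolding Dx_expansion[OF assms(1)] mulA_sum_right mulA_scale_right Dx_wordA genA_eq_wordA
      by (simp add: mulA_wordA)
    have e3: "real k * wordA a w - (\<Sum>q\<in>x_splits a. wordA (LX # snd q @ fst q) w) = (\<Sum>q\<in>x_splits a. G q w)"
      if "a \<in> suppA h" for a
    proof -
      have "xdeg a = k" using that assms(2) by (auto simp: suppA_def xhomog_def)
      have "(\<Sum>q\<in>x_splits a. G q w) = (\<Sum>q\<in>x_splits a. wordA a w - wordA (LX # snd q @ fst q) w)"
        by (rule sum.cong) (auto simp: G_def mulA_wordA subA_def x_splits_def)
      also have "\<dots> = real k * wordA a w - (\<Sum>q\<in>x_splits a. wordA (LX # snd q @ fst q) w)"
        using \<open>xdeg a = k\<close> by (simp add: sum_subtractf card_x_splits)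
      finally show ?thesis by simp
    qed
    show "subA (smulA (real k) h) (mulA (genA LX) (Dx h)) w = (\<Sum>a\<in>suppA h. h a * (\<Sum>q\<in>x_splits a. G q w))"
      unfolding subA_def e1 e2 sum_subtractf[symmetric] right_diff_distrib[symmetric]
      by (rule sum.cong[OF refl]) (simp add: e3)
  qed
  also have "\<dots> \<in> comm"
    unfolding comm_def
    by (intro lspan_sum lspan_scale fin finite_x_splits)
      (auto simp: G_def intro!: commutator_in_comm[unfolded comm_def])
  finally show ?thesis .
qed

section \<open>Homogeneous components\<close>

definition xpart :: "nat \<Rightarrow> ncpoly \<Rightarrow> ncpoly" where
  "xpart k u = (\<lambda>w. if xdeg w = k then u w else 0)"

lemma Afin_xpart [intro]: "u \<in> Afin \<Longrightarrow> xpart k u \<in> Afin"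
  unfolding Afin_def xpart_def by (auto intro: finite_subset[of _ "{w. u w \<noteq> 0}"])

lemma xhomog_xpart: "xhomog k (xpart k u)"
  by (simp add: xhomog_def xpart_def)

lemma xpart_eq_self: "xhomog k u \<Longrightarrow> xpart k u = u"
  unfolding xhomog_def xpart_def by (rule ext) auto

lemma xpart_lincomb: "xpart k (\<lambda>w. a * f w + b * g w) = (\<lambda>w. a * xpart k f w + b * xpart k g w)"
  unfolding xpart_def by (rule ext) simp

lemma xpart_zeroA [simp]: "xpart k zeroA = zeroA"
  unfolding xpart_def zeroA_def by (rule ext) simp

lemma xpart_x: "xpart k (genA LX) = (if k = 1 then genA LX else zeroA)"
  unfolding xpart_def genA_def zeroA_def by (rule ext) auto

lemma xpart_y: "xpart k (genA LY) = (if k = 0 then genA LY else zeroA)"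
  unfolding xpart_def genA_def zeroA_def by (rule ext) auto

lemma xpart_Dx: "xpart k (Dx h) = Dx (xpart (Suc k) h)"
proof
  fix u
  have "xdeg (drop j u @ LX # take j u) = Suc (xdeg u)" for j
    using xdeg_drop_take[of j u] by simp
  then show "xpart k (Dx h) u = Dx (xpart (Suc k) h) u"
    unfolding xpart_def Dx_def by simp
qed

lemma xhomog_subA: "xhomog k f \<Longrightarrow> xhomog k g \<Longrightarrow> xhomog k (subA f g)"
  unfolding xhomog_def subA_def by (metis diff_zero diff_self)

lemma xhomog_lincomb: "xhomog k f \<Longrightarrow> xhomog k g \<Longrightarrow> xhomog k (addA (smulA a f) (smulA b g))"
  unfolding xhomog_def addA_def smulA_def by (metis add.right_neutral mult_zero_right)

lemma xhomog_x: "xhomog 1 (genA LX)"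
  by (simp add: xhomog_def genA_def)

lemma xhomog_y: "xhomog 0 (genA LY)"
  by (simp add: xhomog_def genA_def)

lemma xhomog_mulA: "xhomog i u \<Longrightarrow> xhomog j v \<Longrightarrow> xhomog (i + j) (mulA u v)"
  unfolding xhomog_def
proof (intro allI impI)
  fix w assume u: "\<forall>w. u w \<noteq> 0 \<longrightarrow> xdeg w = i" and v: "\<forall>w. v w \<noteq> 0 \<longrightarrow> xdeg w = j"
    and "mulA u v w \<noteq> 0"
  then obtain n where "u (take n w) * v (drop n w) \<noteq> 0"
    unfolding mulA_def by (auto elim: sum.not_neutral_contains_not_neutral)
  then show "xdeg w = i + j" using u v xdeg_drop_take[of n w] by auto
qed

lemma xhomog_brA: "xhomog i u \<Longrightarrow> xhomog j v \<Longrightarrow> xhomog (i + j) (brA u v)"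
  unfolding brA_def by (metis xhomog_mulA xhomog_subA add.commute)

lemma xpart_mulA: "xpart k (mulA u v) = (\<lambda>w. \<Sum>i\<le>k. mulA (xpart i u) (xpart (k - i) v) w)"
proof
  fix w
  have split: "(\<Sum>i\<le>k. if xdeg (take n w) = i \<and> xdeg (drop n w) = k - i then 1 else 0)
      = (if xdeg w = k then 1 else (0::real))" for n
  proof -
    have "(\<Sum>i\<le>k. if xdeg (take n w) = i \<and> xdeg (drop n w) = k - i then 1 else (0::real))
        = (\<Sum>i\<le>k. if i = xdeg (take n w) then (if xdeg w = k then 1 else 0) else 0)"
      by (rule sum.cong) (use xdeg_drop_take[of n w] in auto)
    then show ?thesis using xdeg_drop_take[of n w] by (simp add: sum.delta)
  qed
  have "(\<Sum>i\<le>k. mulA (xpart i u) (xpart (k - i) v) w)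
      = (\<Sum>n\<in>{0..length w}. u (take n w) * v (drop n w) *
          (\<Sum>i\<le>k. if xdeg (take n w) = i \<and> xdeg (drop n w) = k - i then 1 else 0))"
    unfolding mulA_def xpart_def sum_distrib_left
    by (subst sum.swap) (auto intro!: sum.cong)
  also have "\<dots> = xpart k (mulA u v) w"
    unfolding split xpart_def mulA_def by (simp add: sum_distrib_right)
  finally show "xpart k (mulA u v) w = (\<Sum>i\<le>k. mulA (xpart i u) (xpart (k - i) v) w)" by simp
qed

lemma xpart_brA: "xpart k (brA u v) = (\<lambda>w. \<Sum>i\<le>k. brA (xpart i u) (xpart (k - i) v) w)"
proof
  fix w
  have "(\<Sum>i\<le>k. mulA (xpart (k - i) v) (xpart i u) w) = (\<Sum>i\<le>k. mulA (xpart i v) (xpart (k - i) u) w)"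
    by (rule sum.reindex_bij_witness[of _ "\<lambda>i. k - i" "\<lambda>i. k - i"]) auto
  moreover have "xpart k (brA u v) w = xpart k (mulA u v) w - xpart k (mulA v u) w"
    by (simp add: brA_def xpart_def subA_def)
  ultimately show "xpart k (brA u v) w = (\<Sum>i\<le>k. brA (xpart i u) (xpart (k - i) v) w)"
    unfolding xpart_mulA brA_def subA_def by (simp add: sum_subtractf)
qed

section \<open>Symmetries of Lie elements\<close>

definition transl_inv :: "ncpoly \<Rightarrow> bool" where
  "transl_inv u \<longleftrightarrow> (\<forall>t s. evalA u (\<lambda>m. t m + s) = evalA u t)"

definition mirror :: "nat \<Rightarrow> (nat \<Rightarrow> real) \<Rightarrow> nat \<Rightarrow> real" where
  "mirror k t = (\<lambda>m. - t (k - m))"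

text \<open>A Lie element \<open>l\<close> satisfies \<open>rev(l) = (-1)^(deg l - 1) l\<close> for the word reversal \<open>rev\<close>.
  On the commutative image in \<open>x\<close>-degree \<open>k\<close>, reversal becomes \<open>t\<^sub>m \<mapsto> t\<^bsub>k-m\<^esub>\<close>, and the sign
  coming from the \<open>y\<close>-degree is absorbed by \<open>t \<mapsto> -t\<close>.\<close>
definition rev_antisym :: "nat \<Rightarrow> ncpoly \<Rightarrow> bool" where
  "rev_antisym k u \<longleftrightarrow> (\<forall>t. evalA u (mirror k t) = - ((-1) ^ k) * evalA u t)"

lemma evalA_brA: "a \<in> Afin \<Longrightarrow> b \<in> Afin \<Longrightarrow> evalA (brA a b) t = evalA (mulA a b) t - evalA (mulA b a) t"
  unfolding brA_def by (rule evalA_subA) auto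

lemma evalA_brA_swap: "a \<in> Afin \<Longrightarrow> b \<in> Afin \<Longrightarrow> evalA (brA b a) t = - evalA (brA a b) t"
  by (simp add: evalA_brA)

lemma transl_inv_sum:
  assumes "finite S" "\<And>a. a \<in> S \<Longrightarrow> F a \<in> Afin" "\<And>a. a \<in> S \<Longrightarrow> transl_inv (F a)"
  shows "transl_inv (\<lambda>w. \<Sum>a\<in>S. F a w)"
  using assms by (simp add: transl_inv_def evalA_sum)

lemma rev_antisym_sum:
  assumes "finite S" "\<And>a. a \<in> S \<Longrightarrow> F a \<in> Afin" "\<And>a. a \<in> S \<Longrightarrow> rev_antisym k (F a)"
  shows "rev_antisym k (\<lambda>w. \<Sum>a\<in>S. F a w)"
  using assms by (simp add: rev_antisym_def evalA_sum sum_distrib_left)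

lemma transl_inv_lincomb:
  "f \<in> Afin \<Longrightarrow> g \<in> Afin \<Longrightarrow> transl_inv f \<Longrightarrow> transl_inv g \<Longrightarrow> transl_inv (\<lambda>w. a * f w + b * g w)"
  by (simp add: transl_inv_def evalA_lincomb)

lemma rev_antisym_lincomb:
  "f \<in> Afin \<Longrightarrow> g \<in> Afin \<Longrightarrow> rev_antisym k f \<Longrightarrow> rev_antisym k g \<Longrightarrow> rev_antisym k (\<lambda>w. a * f w + b * g w)"
  by (simp add: rev_antisym_def evalA_lincomb algebra_simps)

lemma transl_inv_mulA:
  assumes "A \<in> Afin" "B \<in> Afin" "xhomog i A" "transl_inv A" "transl_inv B"
  shows "transl_inv (mulA A B)"
  using assms by (simp add: transl_inv_def evalA_mulA shift_translate)

lemma transl_inv_brA: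
  assumes "A \<in> Afin" "B \<in> Afin" "xhomog i A" "xhomog j B" "transl_inv A" "transl_inv B"
  shows "transl_inv (brA A B)"
  using assms transl_inv_mulA[of A B i] transl_inv_mulA[of B A j]
  by (simp add: transl_inv_def evalA_brA)

text \<open>\<open>evalA [\<alpha> y, B] = \<alpha> (t\<^sub>0 - t\<^sub>k) evalA B\<close> is translation invariant although \<open>\<alpha> y\<close> is not.\<close>
lemma transl_inv_brA_y:
  assumes "A \<in> Afin" "B \<in> Afin" "xhomog 0 A" "xhomog k B" "\<And>T. evalA A T = \<alpha> * T 0" "transl_inv B"
  shows "transl_inv (brA A B)" "transl_inv (brA B A)"
proof -
  have "evalA (brA A B) T = \<alpha> * (T 0 - T k) * evalA B T" for T
    using assms by (simp add: evalA_brA evalA_mulA shift_def algebra_simps)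
  then show "transl_inv (brA A B)"
    using assms(6) by (simp add: transl_inv_def)
  then show "transl_inv (brA B A)"
    by (simp add: transl_inv_def evalA_brA_swap[OF assms(1,2)])
qed

lemma evalA_mulA_mirror:
  assumes "A \<in> Afin" "B \<in> Afin" "xhomog i A" "xhomog j B" "rev_antisym i A" "rev_antisym j B"
  shows "evalA (mulA A B) (mirror (i + j) t) = (-1) ^ (i + j) * evalA (mulA B A) t"
proof -
  have "evalA A (mirror (i + j) t) = evalA A (mirror i (shift j t))"
    by (rule evalA_cong[OF assms(3)]) (simp add: mirror_def shift_def)
  moreover have "evalA B (shift i (mirror (i + j) t)) = evalA B (mirror j t)"
    by (rule evalA_cong[OF assms(4)]) (simp add: mirror_def shift_def)
  ultimately have "evalA (mulA A B) (mirror (i + j) t) = (-1) ^ (i + j) * (evalA B t * evalA A (shift j t))"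
    using assms(5,6) by (simp add: evalA_mulA[OF assms(1-3)] rev_antisym_def power_add)
  then show ?thesis
    by (simp add: evalA_mulA[OF assms(2,1,4)])
qed

lemma rev_antisym_brA:
  assumes "A \<in> Afin" "B \<in> Afin" "xhomog i A" "xhomog j B" "rev_antisym i A" "rev_antisym j B"
  shows "rev_antisym (i + j) (brA A B)"
  using evalA_mulA_mirror[OF assms] evalA_mulA_mirror[OF assms(2,1,4,3,6,5)]
  by (simp add: rev_antisym_def evalA_brA assms(1,2) algebra_simps)

text \<open>Properties of the homogeneous components of a Lie element: its \<open>x\<close>-degree-0 part is a
  multiple of \<open>y\<close>, and its parts of \<open>x\<close>-degree at least 2 are sums of brackets, hence killed
  by \<open>\<partial>\<^sub>x\<close>.\<close>
definition lie_symmetric :: "ncpoly \<Rightarrow> bool" where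
  "lie_symmetric u \<longleftrightarrow> u \<in> Afin \<and> (\<exists>\<alpha>. \<forall>t. evalA (xpart 0 u) t = \<alpha> * t 0)
     \<and> (\<forall>k>0. transl_inv (xpart k u)) \<and> (\<forall>k. rev_antisym k (xpart k u))
     \<and> (\<forall>k\<ge>2. Dx (xpart k u) = zeroA)"

lemma lie_symmetric_x: "lie_symmetric (genA LX)"
  by (auto simp: lie_symmetric_def xpart_x transl_inv_def rev_antisym_def)

lemma lie_symmetric_y: "lie_symmetric (genA LY)"
  by (auto simp: lie_symmetric_def xpart_y transl_inv_def rev_antisym_def mirror_def)

lemma lie_symmetric_lincomb:
  assumes f: "lie_symmetric f" and g: "lie_symmetric g"
  shows "lie_symmetric (\<lambda>w. a * f w + b * g w)" (is "lie_symmetric ?h")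
proof -
  from f obtain \<alpha> where \<alpha>: "\<And>t. evalA (xpart 0 f) t = \<alpha> * t 0" and fA: "f \<in> Afin"
    unfolding lie_symmetric_def by blast
  from g obtain \<beta> where \<beta>: "\<And>t. evalA (xpart 0 g) t = \<beta> * t 0" and gA: "g \<in> Afin"
    unfolding lie_symmetric_def by blast
  have hA: "?h \<in> Afin"
    using fA gA by (rule Afin_lincomb)
  have "evalA (xpart 0 ?h) t = (a * \<alpha> + b * \<beta>) * t 0" for t
    unfolding xpart_lincomb evalA_lincomb[OF Afin_xpart[OF fA] Afin_xpart[OF gA]] \<alpha> \<beta>
    by (simp add: algebra_simps)
  moreover have "transl_inv (xpart k ?h)" if "k > 0" for k
    unfolding xpart_lincomb using f g that
    by (intro transl_inv_lincomb Afin_xpart fA gA) (simp_all add: lie_symmetric_def)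
  moreover have "rev_antisym k (xpart k ?h)" for k
    unfolding xpart_lincomb using f g
    by (intro rev_antisym_lincomb Afin_xpart fA gA) (simp_all add: lie_symmetric_def)
  moreover have "Dx (xpart k ?h) = zeroA" if "k \<ge> 2" for k
    using f g that by (simp add: xpart_lincomb Dx_lincomb lie_symmetric_def zeroA_def)
  ultimately show ?thesis
    using hA unfolding lie_symmetric_def by blast
qed

lemma lie_symmetric_addA: "lie_symmetric f \<Longrightarrow> lie_symmetric g \<Longrightarrow> lie_symmetric (addA f g)"
  using lie_symmetric_lincomb[of f g 1 1] by (simp add: addA_def)

lemma lie_symmetric_smulA: "lie_symmetric f \<Longrightarrow> lie_symmetric (smulA c f)"
  using lie_symmetric_lincomb[of f f c 0] by (simp add: smulA_def)

lemma lie_symmetric_zeroA: "lie_symmetric zeroA"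
  using lie_symmetric_smulA[OF lie_symmetric_x, of 0] by (simp add: smulA_def zeroA_def)

lemma evalA_xpart0_brA:
  assumes "a \<in> Afin" "b \<in> Afin" "\<And>t. evalA (xpart 0 a) t = \<alpha> * t 0" "\<And>t. evalA (xpart 0 b) t = \<beta> * t 0"
  shows "evalA (xpart 0 (brA a b)) t = 0"
  using assms
  by (simp add: xpart_brA evalA_brA Afin_xpart evalA_mulA[OF Afin_xpart Afin_xpart xhomog_xpart])

lemma transl_inv_xpart_brA:
  assumes a: "lie_symmetric a" and b: "lie_symmetric b" and "0 < k"
  shows "transl_inv (xpart k (brA a b))"
proof -
  from a b obtain \<alpha> \<beta> where
    \<alpha>: "\<And>t. evalA (xpart 0 a) t = \<alpha> * t 0" and \<beta>: "\<And>t. evalA (xpart 0 b) t = \<beta> * t 0"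
    and A: "a \<in> Afin" "\<And>i. 0 < i \<Longrightarrow> transl_inv (xpart i a)"
    and B: "b \<in> Afin" "\<And>i. 0 < i \<Longrightarrow> transl_inv (xpart i b)"
    unfolding lie_symmetric_def by blast
  have "transl_inv (brA (xpart i a) (xpart (k - i) b))" if "i \<le> k" for i
  proof -
    consider "i = 0" | "i = k" | "0 < i" "i < k" using \<open>i \<le> k\<close> by linarith
    then show ?thesis
    proof cases
      case 1
      then show ?thesis using transl_inv_brA_y(1)[OF _ _ xhomog_xpart xhomog_xpart \<alpha>] A B \<open>0 < k\<close> by auto
    next
      case 2
      then show ?thesis using transl_inv_brA_y(2)[OF _ _ xhomog_xpart xhomog_xpart \<beta>] A B \<open>0 < k\<close> by auto
    qed (use A B in \<open>auto intro!: transl_inv_brA xhomog_xpart\<close>)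
  qed
  then show ?thesis
    unfolding xpart_brA using A(1) B(1) by (intro transl_inv_sum) auto
qed

lemma rev_antisym_xpart_brA:
  assumes "a \<in> Afin" "b \<in> Afin" "\<And>i. rev_antisym i (xpart i a)" "\<And>i. rev_antisym i (xpart i b)"
  shows "rev_antisym k (xpart k (brA a b))"
proof -
  have "rev_antisym k (brA (xpart i a) (xpart (k - i) b))" if "i \<le> k" for i
    using rev_antisym_brA[OF _ _ xhomog_xpart xhomog_xpart, of i a "k - i" b] assms that by auto
  then show ?thesis
    unfolding xpart_brA using assms by (intro rev_antisym_sum) auto
qed

lemma Dx_xpart_brA: "a \<in> Afin \<Longrightarrow> b \<in> Afin \<Longrightarrow> Dx (xpart k (brA a b)) = zeroA"
  unfolding xpart_brA Dx_sum by (simp add: Dx_brA Afin_xpart zeroA_def)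

lemma lie_symmetric_brA:
  assumes "lie_symmetric a" "lie_symmetric b"
  shows "lie_symmetric (brA a b)"
proof -
  from assms obtain \<alpha> \<beta> where
    \<alpha>: "\<And>t. evalA (xpart 0 a) t = \<alpha> * t 0" and \<beta>: "\<And>t. evalA (xpart 0 b) t = \<beta> * t 0"
    and A: "a \<in> Afin" "\<And>i. rev_antisym i (xpart i a)" and B: "b \<in> Afin" "\<And>i. rev_antisym i (xpart i b)"
    unfolding lie_symmetric_def by blast
  have "evalA (xpart 0 (brA a b)) t = 0 * t 0" for t
    using evalA_xpart0_brA[OF A(1) B(1) \<alpha> \<beta>] by simp
  then show ?thesis
    using A B transl_inv_xpart_brA[OF assms] rev_antisym_xpart_brA[OF A(1) B(1)] Dx_xpart_brA[OF A(1) B(1)]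
    unfolding lie_symmetric_def by blast
qed

lemma freeLie_lie_symmetric: "f \<in> freeLie \<Longrightarrow> lie_symmetric f"
  by (induction rule: freeLie.induct)
    (auto intro: lie_symmetric_x lie_symmetric_y lie_symmetric_zeroA lie_symmetric_addA
      lie_symmetric_smulA lie_symmetric_brA)

section \<open>Symmetries of \<open>\<partial>\<^sub>x\<close> on \<open>F(L)\<close>\<close>

lemma rot_translate: "rot n j (\<lambda>m. t m + s) = (\<lambda>m. rot n j t m + s)"
  by (simp add: rot_def)

lemma transl_inv_Dx:
  assumes "h \<in> Afin" "xhomog n h" "transl_inv h"
  shows "transl_inv (Dx h)"
  using assms by (simp add: transl_inv_def evalA_Dx rot_translate)

text \<open>The failure of translation invariance of the factor \<open>\<alpha> y\<close> is compensated by
  \<open>\<partial>\<^sub>x B = 0\<close>: the defect is \<open>\<alpha> s\<close> times the cyclic sum of \<open>B\<close>, which is \<open>evalA (Dx B)\<close>.\<close>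
lemma transl_inv_Dx_mulA_y:
  assumes "A \<in> Afin" "B \<in> Afin" "xhomog 0 A" "xhomog n B" "\<And>T. evalA A T = \<alpha> * T 0"
    "transl_inv B" "Dx B = zeroA"
  shows "transl_inv (Dx (mulA A B))"
  unfolding transl_inv_def
proof (intro allI)
  fix t :: "nat \<Rightarrow> real" and s :: real
  have AB: "mulA A B \<in> Afin" "xhomog n (mulA A B)"
    using assms xhomog_mulA[OF assms(3,4)] by auto
  have ev: "evalA (mulA A B) T = \<alpha> * T 0 * evalA B T" for T
    using assms by (simp add: evalA_mulA)
  have "(\<Sum>j<n. evalA B (rot n j t)) = 0"
    using evalA_Dx[OF assms(2,4), of t] assms(7) by simp
  then have "(\<Sum>j<n. \<alpha> * (rot n j t 0 + s) * evalA B (rot n j t))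
      = (\<Sum>j<n. \<alpha> * rot n j t 0 * evalA B (rot n j t))"
    by (simp add: algebra_simps sum.distrib sum_distrib_left[symmetric])
  then show "evalA (Dx (mulA A B)) (\<lambda>m. t m + s) = evalA (Dx (mulA A B)) t"
    using assms(6) by (simp add: evalA_Dx[OF AB] ev rot_translate transl_inv_def)
qed

lemma rot_mirror:
  assumes "j < n" "m \<le> n"
  shows "rot n j (mirror (n - 1) t) m = mirror n (rot n (n - 1 - j) t) m"
proof -
  have "n - 1 - (m + j) mod n = (n - m + (n - 1 - j)) mod n"
  proof (cases "m + j < n")
    case True
    then show ?thesis using assms by (simp add: le_mod_geq)
  next
    case False
    then have "(m + j) mod n = m + j - n" using assms by (simp add: le_mod_geq)
    then show ?thesis using False assms by simp
  qed
  then show ?thesis by (simp add: rot_def mirror_def)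
qed

lemma evalA_Dx_mulA_mirror:
  assumes "A \<in> Afin" "B \<in> Afin" "xhomog i A" "xhomog j B" "rev_antisym i A" "rev_antisym j B"
  shows "evalA (Dx (mulA A B)) (mirror (i + j - 1) t) = (-1) ^ (i + j) * evalA (Dx (mulA A B)) t"
proof -
  let ?n = "i + j"
  have AB: "mulA A B \<in> Afin" "xhomog ?n (mulA A B)" "mulA B A \<in> Afin" "xhomog ?n (mulA B A)"
    using assms xhomog_mulA[OF assms(3,4)] xhomog_mulA[OF assms(4,3)] by (auto simp: add.commute)
  have "evalA (mulA A B) (rot ?n k (mirror (?n - 1) t)) = (-1) ^ ?n * evalA (mulA B A) (rot ?n (?n - 1 - k) t)"
    if "k < ?n" for k
  proof -
    have "evalA (mulA A B) (rot ?n k (mirror (?n - 1) t))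
        = evalA (mulA A B) (mirror ?n (rot ?n (?n - 1 - k) t))"
      by (rule evalA_cong[OF AB(2)]) (use that rot_mirror in auto)
    then show ?thesis using evalA_mulA_mirror[OF assms] by simp
  qed
  then have "evalA (Dx (mulA A B)) (mirror (?n - 1) t)
      = (-1) ^ ?n * (\<Sum>k<?n. evalA (mulA B A) (rot ?n (?n - Suc k) t))"
    by (simp add: evalA_Dx[OF AB(1,2)] sum_distrib_left)
  also have "\<dots> = (-1) ^ ?n * evalA (Dx (mulA B A)) t"
    by (simp add: evalA_Dx[OF AB(3,4)] sum.nat_diff_reindex[where g = "\<lambda>k. evalA (mulA B A) (rot ?n k t)"])
  finally show ?thesis
    by (simp add: Dx_mulA_commute[OF assms(1,2)])
qed

lemma rev_antisym_Dx_mulA: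
  assumes "A \<in> Afin" "B \<in> Afin" "xhomog i A" "xhomog j B" "rev_antisym i A" "rev_antisym j B" "0 < i + j"
  shows "rev_antisym (i + j - 1) (Dx (mulA A B))"
proof -
  have "(-1) ^ (i + j) = - ((-1) ^ (i + j - 1) :: real)"
    using assms(7) by (metis Suc_diff_1 mult_minus1 power_Suc)
  then show ?thesis
    using evalA_Dx_mulA_mirror[OF assms(1-6)] by (simp add: rev_antisym_def)
qed

lemma Dx_xpart_mulA: "Dx (xpart n (mulA a b)) = (\<lambda>u. \<Sum>i\<le>n. Dx (mulA (xpart i a) (xpart (n - i) b)) u)"
  unfolding xpart_mulA Dx_sum ..

lemma transl_inv_Dx_xpart_mulA:
  assumes a: "lie_symmetric a" and b: "lie_symmetric b" and "2 \<le> n"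
  shows "transl_inv (Dx (xpart n (mulA a b)))"
proof -
  from a b obtain \<alpha> \<beta> where
    \<alpha>: "\<And>t. evalA (xpart 0 a) t = \<alpha> * t 0" and \<beta>: "\<And>t. evalA (xpart 0 b) t = \<beta> * t 0"
    and A: "a \<in> Afin" "\<And>i. 0 < i \<Longrightarrow> transl_inv (xpart i a)" "Dx (xpart n a) = zeroA"
    and B: "b \<in> Afin" "\<And>i. 0 < i \<Longrightarrow> transl_inv (xpart i b)" "Dx (xpart n b) = zeroA"
    using \<open>2 \<le> n\<close> unfolding lie_symmetric_def by blast
  have "0 < n" using \<open>2 \<le> n\<close> by simp
  have "transl_inv (Dx (mulA (xpart i a) (xpart (n - i) b)))" if "i \<le> n" for i
  proof -
    consider "i = 0" | "i = n" | "0 < i" "i < n" using \<open>i \<le> n\<close> by linarith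
    then show ?thesis
    proof cases
      case 1
      then show ?thesis
        using transl_inv_Dx_mulA_y[OF _ _ xhomog_xpart xhomog_xpart \<alpha>] A(1) B(1,3) B(2)[OF \<open>0 < n\<close>] by auto
    next
      case 2
      then show ?thesis
        using transl_inv_Dx_mulA_y[OF _ _ xhomog_xpart xhomog_xpart \<beta>] A(1,3) A(2)[OF \<open>0 < n\<close>] B(1)
        by (auto simp: Dx_mulA_commute)
    next
      case 3
      then show ?thesis
        using A B xhomog_mulA[OF xhomog_xpart[of i a] xhomog_xpart[of "n - i" b]]
        by (intro transl_inv_Dx transl_inv_mulA[OF _ _ xhomog_xpart]) auto
    qed
  qed
  then show ?thesis
    unfolding Dx_xpart_mulA using A(1) B(1) by (intro transl_inv_sum) auto
qed

lemma rev_antisym_Dx_xpart_mulA: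
  assumes "lie_symmetric a" "lie_symmetric b" "0 < n"
  shows "rev_antisym (n - 1) (Dx (xpart n (mulA a b)))"
proof -
  have "rev_antisym (n - 1) (Dx (mulA (xpart i a) (xpart (n - i) b)))" if "i \<le> n" for i
    using rev_antisym_Dx_mulA[OF _ _ xhomog_xpart xhomog_xpart, of i a "n - i" b] assms that
    by (auto simp: lie_symmetric_def)
  then show ?thesis
    unfolding Dx_xpart_mulA using assms by (intro rev_antisym_sum) (auto simp: lie_symmetric_def)
qed

abbreviation lie_products :: "ncpoly set" where
  "lie_products \<equiv> lspan {mulA a b | a b. a \<in> freeLie \<and> b \<in> freeLie}"

lemma lie_products_Dx_xpart_symmetric:
  assumes "g \<in> lie_products" "2 \<le> n"
  shows "g \<in> Afin \<and> transl_inv (Dx (xpart n g)) \<and> rev_antisym (n - 1) (Dx (xpart n g))"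
  using assms(1)
proof (induction rule: lspan_induct_lincomb)
  case zero
  then show ?case by (simp add: Afin_zeroA transl_inv_def rev_antisym_def)
next
  case (base s)
  then obtain a b where "s = mulA a b" "lie_symmetric a" "lie_symmetric b" "a \<in> Afin" "b \<in> Afin"
    using freeLie_lie_symmetric freeLie_Afin by blast
  then show ?case
    using transl_inv_Dx_xpart_mulA rev_antisym_Dx_xpart_mulA assms(2) by auto
next
  case (lincomb f g a b)
  then show ?case
    by (auto simp: xpart_lincomb Dx_lincomb intro!: transl_inv_lincomb rev_antisym_lincomb)
qed

lemma FLrep_Dx_symmetric:
  assumes "f \<in> FLrep" "xhomog n f" "2 \<le> n"
  shows "transl_inv (Dx f) \<and> rev_antisym (n - 1) (Dx f)"
proof -
  obtain g where g: "g \<in> lie_products" "subA f g \<in> comm"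
    using assms(1) unfolding FLrep_def by blast
  have "xhomog (n - 1) (Dx f)"
    using xhomog_Dx[of "n - 1" f] assms(2,3) by simp
  then have "Dx f = xpart (n - 1) (Dx g)"
    using Dx_eq_if_comm[OF g(2)] by (metis xpart_eq_self)
  also have "\<dots> = Dx (xpart n g)"
    using assms(3) by (simp add: xpart_Dx)
  finally show ?thesis
    using lie_products_Dx_xpart_symmetric[OF g(1) assms(3)] by simp
qed

section \<open>Injectivity of the commutative image\<close>

lemma poly_fun_zero_coeff:
  fixes c :: "nat \<Rightarrow> real"
  assumes "finite N" "\<And>z. (\<Sum>n\<in>N. c n * z ^ n) = 0" "n \<in> N"
  shows "c n = 0"
proof -
  define p where "p = (\<Sum>m\<in>N. monom (c m) m)"
  have "\<forall>z. poly p z = 0" unfolding p_def poly_sum poly_monom using assms(2) by simp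
  then have "coeff p n = 0" by (simp add: poly_all_0_iff_0)
  moreover have "coeff p n = c n"
    unfolding p_def coeff_sum coeff_monom using assms(1,3) by (simp add: sum.delta)
  ultimately show ?thesis by simp
qed

fun split_ys :: "letter list \<Rightarrow> nat \<times> letter list" where
  "split_ys [] = (0, [])"
| "split_ys (LX # w) = (0, w)"
| "split_ys (LY # w) = (Suc (fst (split_ys w)), snd (split_ys w))"

lemma split_ys_eq: "0 < xdeg w \<Longrightarrow> w = replicate (fst (split_ys w)) LY @ LX # snd (split_ys w)"
proof (induction w)
  case (Cons c w)
  then show ?case by (cases c) auto
qed simp

lemma split_ys_replicate [simp]: "split_ys (replicate n LY @ LX # v) = (n, v)"
  by (induction n) auto

lemma xdeg_0_eq_replicate: "xdeg w = 0 \<Longrightarrow> w = replicate (length w) LY"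
proof (induction w)
  case (Cons c w)
  then show ?case by (cases c) auto
qed simp

definition yx_tail :: "nat \<Rightarrow> ncpoly \<Rightarrow> ncpoly" where
  "yx_tail n f = (\<lambda>v. f (replicate n LY @ LX # v))"

lemma xhomog_yx_tail: "xhomog (Suc k) f \<Longrightarrow> xhomog k (yx_tail n f)"
  by (auto simp: xhomog_def yx_tail_def)

lemma suppA_yx_tail:
  assumes "xhomog (Suc k) f"
  shows "suppA (yx_tail n f) = (\<lambda>w. snd (split_ys w)) ` {w \<in> suppA f. fst (split_ys w) = n}"
proof -
  have "w = replicate n LY @ LX # snd (split_ys w)" if "w \<in> suppA f" "fst (split_ys w) = n" for w
    using that assms split_ys_eq[of w] by (auto simp: suppA_def xhomog_def)
  then show ?thesis
    by (auto simp: suppA_def yx_tail_def image_iff intro!: exI[of _ "replicate n LY @ LX # _"])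
qed

lemma evalA_yx_tail:
  assumes "f \<in> Afin" "xhomog (Suc k) f"
  shows "(\<Sum>w\<in>{w \<in> suppA f. fst (split_ys w) = n}. f w * word_mon t w)
    = t 0 ^ n * evalA (yx_tail n f) (shift 1 t)"
proof -
  let ?W = "{w \<in> suppA f. fst (split_ys w) = n}"
  have w: "w = replicate n LY @ LX # snd (split_ys w)" if "w \<in> ?W" for w
    using that assms(2) split_ys_eq[of w] by (auto simp: suppA_def xhomog_def)
  have inj: "inj_on (\<lambda>w. snd (split_ys w)) ?W"
    by (metis (no_types, lifting) inj_onI w)
  have "evalA (yx_tail n f) (shift 1 t)
      = (\<Sum>w\<in>?W. yx_tail n f (snd (split_ys w)) * word_mon (shift 1 t) (snd (split_ys w)))"
    unfolding evalA_def suppA_yx_tail[OF assms(2)] by (rule sum.reindex[OF inj, unfolded comp_def])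
  also have "\<dots> = (\<Sum>w\<in>?W. f w * word_mon (shift 1 t) (snd (split_ys w)))"
    by (rule sum.cong[OF refl]) (metis w yx_tail_def)
  finally have "evalA (yx_tail n f) (shift 1 t) = (\<Sum>w\<in>?W. f w * word_mon (shift 1 t) (snd (split_ys w)))" .
  moreover have "word_mon t w = t 0 ^ n * word_mon (shift 1 t) (snd (split_ys w))" if "w \<in> ?W" for w
    by (subst w[OF that]) (simp add: word_mon_replicate_LY shift_def)
  ultimately show ?thesis
    by (simp add: sum_distrib_left mult_ac)
qed

lemma evalA_yx_expansion:
  assumes "f \<in> Afin" "xhomog (Suc k) f"
  shows "evalA f t = (\<Sum>n\<in>(\<lambda>w. fst (split_ys w)) ` suppA f. t 0 ^ n * evalA (yx_tail n f) (shift 1 t))"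
proof -
  have "finite (suppA f)" using assms(1) by (simp add: Afin_iff_finite_suppA)
  then have "evalA f t = (\<Sum>n\<in>(\<lambda>w. fst (split_ys w)) ` suppA f.
      \<Sum>w\<in>{w \<in> suppA f. fst (split_ys w) = n}. f w * word_mon t w)"
    unfolding evalA_def by (rule sum.image_gen)
  then show ?thesis by (simp add: evalA_yx_tail[OF assms])
qed

lemma evalA_eq_zero_imp_zeroA_xdeg0:
  assumes "f \<in> Afin" "xhomog 0 f" "\<And>t. evalA f t = 0"
  shows "f = zeroA"
proof -
  have fin: "finite (length ` suppA f)" using assms(1) by (simp add: Afin_iff_finite_suppA)
  have rep: "w = replicate (length w) LY" if "w \<in> suppA f" for w
    using that assms(2) xdeg_0_eq_replicate by (auto simp: suppA_def xhomog_def)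
  have mon: "f (replicate (length w) LY) * z ^ length w = f w * word_mon (\<lambda>_. z) w" if "w \<in> suppA f" for w z
    using rep[OF that] word_mon_replicate_LY[of "\<lambda>_. z" "length w" "[]"]
    by (metis append_Nil2 mult.right_neutral word_mon.simps(1))
  have "inj_on length (suppA f)" by (metis inj_onI rep)
  then have "(\<Sum>n\<in>length ` suppA f. f (replicate n LY) * z ^ n) = evalA f (\<lambda>_. z)" for z
    unfolding evalA_def by (simp add: sum.reindex mon)
  then have "f (replicate (length w) LY) = 0" if "w \<in> suppA f" for w
    using poly_fun_zero_coeff[OF fin, of "\<lambda>n. f (replicate n LY)"] assms(3) that by auto
  then show ?thesis
    using rep by (auto simp: suppA_empty_iff[symmetric] suppA_def)
qed

lemma yx_tails_zero_imp_zeroA: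
  assumes "xhomog (Suc k) f" "\<And>n. yx_tail n f = zeroA"
  shows "f = zeroA"
proof
  fix w
  show "f w = zeroA w"
  proof (rule ccontr)
    assume nz: "f w \<noteq> zeroA w"
    then have "0 < xdeg w" using assms(1) by (auto simp: xhomog_def zeroA_def)
    then have "f w = yx_tail (fst (split_ys w)) f (snd (split_ys w))"
      by (metis split_ys_eq yx_tail_def)
    then show False using assms(2) nz by (simp add: zeroA_def)
  qed
qed

text \<open>Induction on the \<open>x\<close>-degree: the coefficient of \<open>t\<^sub>0^n\<close> in \<open>evalA f\<close> is the commutative
  image, in the shifted variables, of the coefficient \<open>yx_tail n f\<close> of the prefix \<open>y^n x\<close>.\<close>
lemma evalA_eq_zero_imp_zeroA:
  assumes "f \<in> Afin" "xhomog k f" "\<And>t. evalA f t = 0"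
  shows "f = zeroA"
  using assms
proof (induction k arbitrary: f)
  case 0
  then show ?case by (rule evalA_eq_zero_imp_zeroA_xdeg0)
next
  case (Suc k)
  let ?N = "(\<lambda>w. fst (split_ys w)) ` suppA f"
  have fin: "finite ?N" using Suc.prems(1) by (simp add: Afin_iff_finite_suppA)
  have "evalA (yx_tail n f) t = 0" for n t
  proof (cases "n \<in> ?N")
    case True
    have "(\<Sum>n\<in>?N. evalA (yx_tail n f) t * z ^ n) = 0" for z
      using evalA_yx_expansion[OF Suc.prems(1,2), of "\<lambda>m. if m = 0 then z else t (m - 1)"] Suc.prems(3)
      by (simp add: shift_def mult.commute)
    then show ?thesis using poly_fun_zero_coeff[OF fin, of "\<lambda>n. evalA (yx_tail n f) t", OF _ True] by blast
  next
    case False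
    then have "suppA (yx_tail n f) = {}" by (auto simp: suppA_yx_tail[OF Suc.prems(2)])
    then show ?thesis by (simp add: suppA_empty_iff)
  qed
  moreover have "yx_tail n f \<in> Afin" for n
    using Suc.prems(1,2) by (simp add: Afin_iff_finite_suppA suppA_yx_tail)
  ultimately have "yx_tail n f = zeroA" for n
    using Suc.IH xhomog_yx_tail[OF Suc.prems(2)] by blast
  then show ?case
    by (rule yx_tails_zero_imp_zeroA[OF Suc.prems(2)])
qed

lemma evalA_inject:
  assumes "f \<in> Afin" "g \<in> Afin" "xhomog k f" "xhomog k g" "\<And>t. evalA f t = evalA g t"
  shows "f = g"
proof -
  have "subA f g = zeroA"
    using assms by (intro evalA_eq_zero_imp_zeroA[of _ k]) (auto simp: xhomog_subA evalA_subA)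
  then show ?thesis by (simp add: subA_def zeroA_def fun_eq_iff)
qed

section \<open>The elements \<open>l\<^sub>P\<close>\<close>

lemma ady_0: "ady 0 = genA LX"
  by (simp add: ady_def)

lemma ady_Suc: "ady (Suc i) = brA (genA LY) (ady i)"
  by (simp add: ady_def)

lemma ady_freeLie: "ady i \<in> freeLie"
  by (induction i) (simp_all add: ady_0 ady_Suc fl_x fl_y fl_br)

lemma Afin_ady: "ady i \<in> Afin"
  by (rule freeLie_Afin[OF ady_freeLie])

lemma xhomog_ady: "xhomog 1 (ady i)"
proof (induction i)
  case (Suc i)
  then show ?case using xhomog_brA[OF xhomog_y Suc.IH] by (simp add: ady_Suc)
qed (use xhomog_x in \<open>simp add: ady_0\<close>)

lemma evalA_ady: "evalA (ady i) t = (t 0 - t 1) ^ i"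
proof (induction i arbitrary: t)
  case (Suc i)
  have "evalA (ady (Suc i)) t = evalA (mulA (genA LY) (ady i)) t - evalA (mulA (ady i) (genA LY)) t"
    by (simp add: ady_Suc evalA_brA[OF Afin_genA Afin_ady])
  also have "\<dots> = t 0 * (t 0 - t 1) ^ i - (t 0 - t 1) ^ i * t 1"
    by (simp add: evalA_mulA[OF Afin_genA Afin_ady xhomog_y] evalA_mulA[OF Afin_ady Afin_genA xhomog_ady]
        Suc.IH shift_def)
  finally show ?case by (simp add: algebra_simps)
qed (simp add: ady_0)

lemma evalA_brA_ady:
  "evalA (brA (ady i) (ady j)) t = (t 0 - t 1) ^ i * (t 1 - t 2) ^ j - (t 0 - t 1) ^ j * (t 1 - t 2) ^ i"
  by (simp add: evalA_brA[OF Afin_ady Afin_ady] evalA_mulA[OF Afin_ady Afin_ady xhomog_ady] evalA_ady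
      shift_def numeral_2_eq_2)

lemma lP_superset:
  assumes "finite S" "supp2 P \<subseteq> S"
  shows "lP P = (\<lambda>w. \<Sum>p\<in>S. P p * brA (ady (fst p)) (ady (snd p)) w)"
proof
  fix w
  have "lP P w = (\<Sum>p\<in>supp2 P. P p * brA (ady (fst p)) (ady (snd p)) w)"
    unfolding lP_def by (simp add: split_def)
  also have "\<dots> = (\<Sum>p\<in>S. P p * brA (ady (fst p)) (ady (snd p)) w)"
    by (rule sum.mono_neutral_left) (use assms in \<open>auto simp: supp2_def\<close>)
  finally show "lP P w = (\<Sum>p\<in>S. P p * brA (ady (fst p)) (ady (snd p)) w)" .
qed

lemma peval_superset:
  assumes "finite S" "supp2 P \<subseteq> S"
  shows "peval P a b = (\<Sum>p\<in>S. P p * a ^ fst p * b ^ snd p)"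
proof -
  have "peval P a b = (\<Sum>p\<in>supp2 P. P p * a ^ fst p * b ^ snd p)"
    unfolding peval_def by (simp add: split_def)
  also have "\<dots> = (\<Sum>p\<in>S. P p * a ^ fst p * b ^ snd p)"
    by (rule sum.mono_neutral_left) (use assms in \<open>auto simp: supp2_def\<close>)
  finally show ?thesis .
qed

lemma lP_freeLie:
  assumes "P \<in> Poly2"
  shows "lP P \<in> freeLie"
proof -
  have fin: "finite (supp2 P)" using assms by (simp add: Poly2_def)
  have "(\<lambda>w. P p * brA (ady (fst p)) (ady (snd p)) w) \<in> freeLie" for p
    using fl_smul[OF fl_br[OF ady_freeLie ady_freeLie]] by (simp add: smulA_def)
  then show ?thesis
    by (subst lP_superset[OF fin order_refl]) (rule freeLie_sum[OF fin])
qed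

lemma Afin_lP: "P \<in> Poly2 \<Longrightarrow> lP P \<in> Afin"
  by (rule freeLie_Afin[OF lP_freeLie])

lemma xhomog_lP: "xhomog 2 (lP P)"
  unfolding xhomog_def lP_def
proof (intro allI impI)
  fix w assume "(\<Sum>(i, j)\<in>supp2 P. P (i, j) * brA (ady i) (ady j) w) \<noteq> 0"
  then obtain p where "(case p of (i, j) \<Rightarrow> P (i, j) * brA (ady i) (ady j) w) \<noteq> 0"
    by (auto elim: sum.not_neutral_contains_not_neutral)
  then have "brA (ady (fst p)) (ady (snd p)) w \<noteq> 0"
    by (auto simp: split_def)
  then show "xdeg w = 2"
    using xhomog_brA[OF xhomog_ady xhomog_ady, of "fst p" "snd p"] by (simp add: xhomog_def)
qed

lemma evalA_lP:
  assumes "P \<in> Poly2"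
  shows "evalA (lP P) t = peval P (t 0 - t 1) (t 1 - t 2) - peval P (t 1 - t 2) (t 0 - t 1)"
proof -
  have fin: "finite (supp2 P)" using assms by (simp add: Poly2_def)
  have "evalA (lP P) t = (\<Sum>p\<in>supp2 P. P p * evalA (brA (ady (fst p)) (ady (snd p))) t)"
    unfolding lP_superset[OF fin order_refl]
    by (subst evalA_sum[OF fin]) (auto simp: evalA_scale intro: Afin_scale Afin_brA Afin_ady)
  then show ?thesis
    unfolding peval_superset[OF fin order_refl] evalA_brA_ady
    by (simp add: algebra_simps sum_subtractf)
qed

lemma AntiPoly_Poly2: "P \<in> AntiPoly \<Longrightarrow> P \<in> Poly2"
  unfolding AntiPoly_def by blast

lemma AntiPoly_swap:
  assumes "P \<in> AntiPoly"
  shows "P (prod.swap p) = - P p"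
proof -
  have "\<forall>i j. P (i, j) = - P (j, i)" using assms unfolding AntiPoly_def by blast
  then show ?thesis by (cases p) (metis swap_simp)
qed

lemma peval_swap_AntiPoly:
  assumes "P \<in> AntiPoly"
  shows "peval P b a = - peval P a b"
proof -
  have fin: "finite (supp2 P)" using AntiPoly_Poly2[OF assms] by (simp add: Poly2_def)
  have "prod.swap p \<in> supp2 P" if "p \<in> supp2 P" for p
    using that AntiPoly_swap[OF assms, of p] by (simp add: supp2_def)
  then have sw: "prod.swap ` supp2 P = supp2 P"
    by (metis (no_types, lifting) image_subset_iff subset_antisym swap_swap image_eqI subsetI)
  have "peval P b a = (\<Sum>p\<in>prod.swap ` supp2 P. P p * b ^ fst p * a ^ snd p)"
    by (simp add: sw peval_superset[OF fin order_refl])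
  also have "\<dots> = (\<Sum>p\<in>supp2 P. - (P p * a ^ fst p * b ^ snd p))"
    by (subst sum.reindex) (auto simp: AntiPoly_swap[OF assms] mult_ac)
  finally show ?thesis
    by (simp add: sum_negf peval_superset[OF fin order_refl])
qed

lemma evalA_lP_AntiPoly:
  assumes "P \<in> AntiPoly"
  shows "evalA (lP P) t = 2 * peval P (t 0 - t 1) (t 1 - t 2)"
  using evalA_lP[OF AntiPoly_Poly2[OF assms], of t] peval_swap_AntiPoly[OF assms, of "t 1 - t 2"]
  by simp

lemma lP_lincomb:
  assumes "P \<in> Poly2" "Q \<in> Poly2"
  shows "lP (\<lambda>p. a * P p + b * Q p) = addA (smulA a (lP P)) (smulA b (lP Q))"
proof -
  let ?S = "supp2 P \<union> supp2 Q"
  have fin: "finite ?S" using assms by (simp add: Poly2_def)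
  have sub: "supp2 (\<lambda>p. a * P p + b * Q p) \<subseteq> ?S"
    by (auto simp: supp2_def)
  show ?thesis
    unfolding lP_superset[OF fin sub] lP_superset[OF fin Un_upper1] lP_superset[OF fin Un_upper2]
    by (auto simp: addA_def smulA_def sum.distrib sum_distrib_left algebra_simps)
qed

lemma AntiPoly_lincomb:
  assumes "P \<in> AntiPoly" "Q \<in> AntiPoly"
  shows "(\<lambda>p. a * P p + b * Q p) \<in> AntiPoly"
proof -
  have "supp2 (\<lambda>p. a * P p + b * Q p) \<subseteq> supp2 P \<union> supp2 Q"
    by (auto simp: supp2_def)
  then have "finite (supp2 (\<lambda>p. a * P p + b * Q p))"
    using AntiPoly_Poly2[OF assms(1)] AntiPoly_Poly2[OF assms(2)]
    by (auto simp: Poly2_def intro: finite_subset)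
  moreover have "a * P (i, j) + b * Q (i, j) = - (a * P (j, i) + b * Q (j, i))" for i j
    using AntiPoly_swap[OF assms(1), of "(j, i)"] AntiPoly_swap[OF assms(2), of "(j, i)"] by simp
  ultimately show ?thesis
    unfolding AntiPoly_def Poly2_def mem_Collect_eq by blast
qed

definition yxy :: "nat \<times> nat \<Rightarrow> letter list" where
  "yxy p = replicate (fst p) LY @ LX # replicate (snd p) LY"

text \<open>The element \<open>\<Sum> P(i, j) y^i x y^j\<close> has commutative image \<open>P(t\<^sub>0, t\<^sub>1)\<close>, so the
  injectivity of \<open>evalA\<close> transfers to \<open>peval\<close>.\<close>
definition bipoly_word :: "bipoly \<Rightarrow> ncpoly" where
  "bipoly_word P = (\<lambda>w. \<Sum>p\<in>supp2 P. P p * wordA (yxy p) w)"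

lemma yxy_inject: "yxy p = yxy q \<Longrightarrow> p = q"
  using split_ys_replicate[of "fst p" "replicate (snd p) LY"]
    split_ys_replicate[of "fst q" "replicate (snd q) LY"]
  by (metis yxy_def length_replicate prod.expand prod.inject)

lemma Afin_bipoly_word: "P \<in> Poly2 \<Longrightarrow> bipoly_word P \<in> Afin"
  unfolding bipoly_word_def Poly2_def by (intro Afin_sum Afin_scale Afin_wordA) simp_all

lemma evalA_bipoly_word:
  assumes "P \<in> Poly2"
  shows "evalA (bipoly_word P) t = peval P (t 0) (t 1)"
proof -
  have fin: "finite (supp2 P)" using assms by (simp add: Poly2_def)
  have "word_mon t (yxy p) = t 0 ^ fst p * t 1 ^ snd p" for p
    using word_mon_replicate_LY[of "shift 1 t" "snd p" "[]"]
    by (simp add: yxy_def word_mon_replicate_LY shift_def)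
  then show ?thesis
    unfolding bipoly_word_def peval_superset[OF fin order_refl]
    by (subst evalA_sum[OF fin]) (auto simp: evalA_scale evalA_wordA mult_ac)
qed

lemma xhomog_bipoly_word: "xhomog 1 (bipoly_word P)"
  unfolding xhomog_def bipoly_word_def
  by (auto simp: wordA_def yxy_def elim: sum.not_neutral_contains_not_neutral split: if_splits)

lemma bipoly_word_yxy:
  assumes "P \<in> Poly2"
  shows "bipoly_word P (yxy q) = P q"
proof -
  have "bipoly_word P (yxy q) = (\<Sum>p\<in>supp2 P. if p = q then P q else 0)"
    unfolding bipoly_word_def wordA_def by (rule sum.cong) (auto dest: yxy_inject)
  then show ?thesis
    using assms by (simp add: Poly2_def supp2_def)
qed

lemma peval_inject:
  assumes "P \<in> Poly2" "Q \<in> Poly2" "\<And>a b. peval P a b = peval Q a b"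
  shows "P = Q"
proof -
  have "bipoly_word P = bipoly_word Q"
    using assms by (intro evalA_inject[OF _ _ xhomog_bipoly_word xhomog_bipoly_word])
      (simp_all add: Afin_bipoly_word evalA_bipoly_word)
  then show ?thesis
    using bipoly_word_yxy assms(1,2) by (metis ext)
qed

lemma lP_inject:
  assumes "P \<in> AntiPoly" "Q \<in> AntiPoly" "lP P = lP Q"
  shows "P = Q"
proof (rule peval_inject[OF AntiPoly_Poly2 AntiPoly_Poly2, OF assms(1,2)])
  fix a b :: real
  have "evalA (lP P) (\<lambda>m. if m = 0 then a + b else if m = 1 then b else 0)
      = evalA (lP Q) (\<lambda>m. if m = 0 then a + b else if m = 1 then b else 0)"
    using assms(3) by simp
  then show "peval P a b = peval Q a b"
    by (simp add: evalA_lP_AntiPoly[OF assms(1)] evalA_lP_AntiPoly[OF assms(2)])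
qed

section \<open>Recognising \<open>l\<^sub>P\<close>\<close>

text \<open>Bivariate polynomials are modelled as \<open>real poly poly\<close> (outer variable \<open>Y\<close>), which gives
  closure of polynomial functions under sums and products for free.\<close>
definition bpoly_eval :: "real poly poly \<Rightarrow> real \<Rightarrow> real \<Rightarrow> real" where
  "bpoly_eval q a b = poly (poly q [:b:]) a"

lemma bpoly_eval_word_mon: "bpoly_eval (word_mon T w) a b = word_mon (\<lambda>m. bpoly_eval (T m) a b) w"
proof (induction w arbitrary: T)
  case (Cons c w)
  then show ?case by (cases c) (simp_all add: bpoly_eval_def)
qed (simp add: bpoly_eval_def)

lemma bpoly_eval_Poly2: "\<exists>P\<in>Poly2. \<forall>a b. peval P a b = bpoly_eval q a b"
proof -
  define S where "S = Sigma {..degree q} (\<lambda>j. {..degree (coeff q j)})"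
  define P where "P p = (if p \<in> prod.swap ` S then coeff (coeff q (snd p)) (fst p) else 0)" for p
  have fin: "finite (prod.swap ` S)" by (simp add: S_def)
  have sub: "supp2 P \<subseteq> prod.swap ` S" by (auto simp: supp2_def P_def)
  have "peval P a b = bpoly_eval q a b" for a b
  proof -
    have "peval P a b = (\<Sum>(j, i)\<in>S. coeff (coeff q j) i * a ^ i * b ^ j)"
      unfolding peval_superset[OF fin sub]
      by (subst sum.reindex) (auto simp: P_def split_def inj_on_def)
    also have "\<dots> = (\<Sum>j\<le>degree q. poly (coeff q j) a * b ^ j)"
      unfolding S_def by (simp add: sum.Sigma[symmetric] poly_altdef sum_distrib_right)
    also have "\<dots> = bpoly_eval q a b"
      by (simp add: bpoly_eval_def poly_altdef[of q] poly_sum poly_mult)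
    finally show ?thesis .
  qed
  moreover have "P \<in> Poly2" using fin sub by (auto simp: Poly2_def intro: finite_subset)
  ultimately show ?thesis by blast
qed

text \<open>The substitution \<open>t = (a + b, b, 0)\<close> is chosen so that \<open>t\<^sub>0 - t\<^sub>1 = a\<close> and \<open>t\<^sub>1 - t\<^sub>2 = b\<close>.\<close>
lemma evalA_Poly2:
  assumes "u \<in> Afin"
  shows "\<exists>P\<in>Poly2. \<forall>a b. peval P a b = evalA u (\<lambda>m. if m = 0 then a + b else if m = 1 then b else 0)"
proof -
  define T :: "nat \<Rightarrow> real poly poly" where
    "T m = (if m = 0 then [:[:0, 1:], 1:] else if m = 1 then [:0, 1:] else 0)" for m
  define q where "q = (\<Sum>w\<in>suppA u. [:[:u w:]:] * word_mon T w)"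
  have "(\<lambda>m. bpoly_eval (T m) a b) = (\<lambda>m. if m = 0 then a + b else if m = 1 then b else 0)" for a b
    by (auto simp: T_def bpoly_eval_def)
  then have "bpoly_eval q a b = evalA u (\<lambda>m. if m = 0 then a + b else if m = 1 then b else 0)" for a b
    unfolding q_def evalA_def
    by (simp add: bpoly_eval_def poly_sum bpoly_eval_word_mon[unfolded bpoly_eval_def])
  then show ?thesis using bpoly_eval_Poly2[of q] by auto
qed

lemma AntiPoly_antisymmetrization:
  assumes "P \<in> Poly2"
  shows "\<exists>Q\<in>AntiPoly. \<forall>a b. peval Q a b = c * (peval P a b - peval P b a)"
proof -
  define Q where "Q p = c * (P p - P (prod.swap p))" for p
  let ?S = "supp2 P \<union> prod.swap ` supp2 P"
  have fin: "finite ?S" using assms by (simp add: Poly2_def)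
  have sub: "supp2 Q \<subseteq> ?S" "supp2 P \<subseteq> ?S"
    by (auto simp: Q_def supp2_def image_iff)
  have "peval Q a b = c * (peval P a b - peval P b a)" for a b
  proof -
    have "peval Q a b = c * ((\<Sum>p\<in>?S. P p * a ^ fst p * b ^ snd p)
        - (\<Sum>p\<in>?S. P (prod.swap p) * a ^ fst p * b ^ snd p))"
      unfolding peval_superset[OF fin sub(1)]
      by (simp add: Q_def sum_distrib_left sum_subtractf[symmetric] algebra_simps)
    also have "(\<Sum>p\<in>?S. P (prod.swap p) * a ^ fst p * b ^ snd p) = (\<Sum>p\<in>?S. P p * b ^ fst p * a ^ snd p)"
      by (rule sum.reindex_bij_witness[where i = prod.swap and j = prod.swap]) (auto simp: mult_ac)
    finally show ?thesis
      by (simp add: peval_superset[OF fin sub(2)])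
  qed
  moreover have "Q \<in> AntiPoly"
    using fin sub by (auto simp: AntiPoly_def Poly2_def Q_def algebra_simps intro: finite_subset)
  ultimately show ?thesis by blast
qed

text \<open>With \<open>E = evalA u\<close>, translation invariance gives \<open>P\<^sub>0(t\<^sub>0 - t\<^sub>1, t\<^sub>1 - t\<^sub>2) = E t\<close> and the
  reversal antisymmetry gives \<open>P\<^sub>0(t\<^sub>1 - t\<^sub>2, t\<^sub>0 - t\<^sub>1) = -E t\<close>, so the antisymmetrization
  \<open>P = (P\<^sub>0(X, Y) - P\<^sub>0(Y, X))/4\<close> has \<open>evalA (lP P) = 2 P(t\<^sub>0 - t\<^sub>1, t\<^sub>1 - t\<^sub>2) = E\<close>.\<close>
lemma transl_inv_rev_antisym_imp_lP:
  assumes "u \<in> Afin" "xhomog 2 u" "transl_inv u" "rev_antisym 2 u"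
  shows "\<exists>P\<in>AntiPoly. u = lP P"
proof -
  obtain P0 where "P0 \<in> Poly2"
    and P0: "\<And>a b. peval P0 a b = evalA u (\<lambda>m. if m = 0 then a + b else if m = 1 then b else 0)"
    using evalA_Poly2[OF assms(1)] by blast
  then obtain P where "P \<in> AntiPoly" and P: "\<And>a b. peval P a b = (peval P0 a b - peval P0 b a) / 4"
    using AntiPoly_antisymmetrization[of P0 "1 / 4"] by auto
  have "evalA (lP P) t = evalA u t" for t
  proof -
    have "peval P0 (t 0 - t 1) (t 1 - t 2) = evalA u (\<lambda>m. t m + - t 2)"
      unfolding P0 by (rule evalA_cong[OF assms(2)]) (auto simp: numeral_2_eq_2 le_Suc_eq)
    also have "\<dots> = evalA u t"
      using assms(3) unfolding transl_inv_def by blast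
    finally have E1: "peval P0 (t 0 - t 1) (t 1 - t 2) = evalA u t" .
    have "peval P0 (t 1 - t 2) (t 0 - t 1) = evalA u (mirror 2 (\<lambda>m. t m + - t 0))"
      unfolding P0 by (rule evalA_cong[OF assms(2)]) (auto simp: mirror_def numeral_2_eq_2 le_Suc_eq)
    also have "\<dots> = - evalA u (\<lambda>m. t m + - t 0)"
      using assms(4) by (simp add: rev_antisym_def)
    also have "\<dots> = - evalA u t"
      using assms(3) unfolding transl_inv_def by metis
    finally have E2: "peval P0 (t 1 - t 2) (t 0 - t 1) = - evalA u t" .
    show ?thesis
      unfolding evalA_lP_AntiPoly[OF \<open>P \<in> AntiPoly\<close>] P E1 E2 by simp
  qed
  then have "u = lP P"
    using evalA_inject[OF assms(1) Afin_lP[OF AntiPoly_Poly2] assms(2) xhomog_lP] \<open>P \<in> AntiPoly\<close> by metis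
  with \<open>P \<in> AntiPoly\<close> show ?thesis by blast
qed

section \<open>The map \<open>\<Phi>\<close>\<close>

lemma F3rep_Afin: "f \<in> F3rep \<Longrightarrow> f \<in> Afin"
  unfolding F3rep_def FLrep_def by blast

lemma F3rep_xhomog: "f \<in> F3rep \<Longrightarrow> xhomog 3 f"
  unfolding F3rep_def by blast

lemma xhomog_Dx_F3rep: "f \<in> F3rep \<Longrightarrow> xhomog 2 (Dx f)"
  using xhomog_Dx[of 2 f] F3rep_xhomog by (simp add: numeral_3_eq_3)

lemma F3rep_Dx_eq_lP: "f \<in> F3rep \<Longrightarrow> \<exists>P\<in>AntiPoly. Dx f = lP P"
  using FLrep_Dx_symmetric[of f 3] F3rep_xhomog[of f] Afin_Dx[OF F3rep_Afin] xhomog_Dx_F3rep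
  by (intro transl_inv_rev_antisym_imp_lP) (auto simp: F3rep_def)

lemma F3rep_ex1_lP: "f \<in> F3rep \<Longrightarrow> \<exists>!P. P \<in> AntiPoly \<and> Dx f = lP P"
  using F3rep_Dx_eq_lP lP_inject by metis

lemma Phi_AntiPoly: "f \<in> F3rep \<Longrightarrow> Phi f \<in> AntiPoly \<and> Dx f = lP (Phi f)"
  unfolding Phi_def by (rule theI'[OF F3rep_ex1_lP])

lemma Phi_eqI: "f \<in> F3rep \<Longrightarrow> P \<in> AntiPoly \<Longrightarrow> Dx f = lP P \<Longrightarrow> Phi f = P"
  unfolding Phi_def by (rule the1_equality[OF F3rep_ex1_lP]) simp_all

lemma Phi_eq_if_comm: "subA f g \<in> comm \<Longrightarrow> Phi f = Phi g"
  unfolding Phi_def by (simp add: Dx_eq_if_comm)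

lemma F3rep_lincomb:
  assumes "f \<in> F3rep" "g \<in> F3rep"
  shows "addA (smulA a f) (smulA b g) \<in> F3rep"
proof -
  obtain f' g' where f': "f' \<in> lie_products" "subA f f' \<in> comm"
    and g': "g' \<in> lie_products" "subA g g' \<in> comm"
    using assms unfolding F3rep_def FLrep_def by blast
  have "subA (addA (smulA a f) (smulA b g)) (addA (smulA a f') (smulA b g'))
      = addA (smulA a (subA f f')) (smulA b (subA g g'))"
    by (simp add: addA_def smulA_def subA_def fun_eq_iff algebra_simps)
  then have "subA (addA (smulA a f) (smulA b g)) (addA (smulA a f') (smulA b g')) \<in> comm"
    using f'(2) g'(2) unfolding comm_def by (simp add: lspan_lincomb)
  moreover have "addA (smulA a f') (smulA b g') \<in> lie_products"
    using f'(1) g'(1) by (rule lspan_lincomb)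
  ultimately show ?thesis
    using assms by (auto simp: F3rep_def FLrep_def intro: xhomog_lincomb)
qed

lemma Phi_lincomb:
  assumes "f \<in> F3rep" "g \<in> F3rep"
  shows "Phi (addA (smulA a f) (smulA b g)) = (\<lambda>p. a * Phi f p + b * Phi g p)"
proof (rule Phi_eqI[OF F3rep_lincomb[OF assms]])
  show "(\<lambda>p. a * Phi f p + b * Phi g p) \<in> AntiPoly"
    using Phi_AntiPoly assms by (simp add: AntiPoly_lincomb)
  show "Dx (addA (smulA a f) (smulA b g)) = lP (\<lambda>p. a * Phi f p + b * Phi g p)"
    using Phi_AntiPoly[OF assms(1)] Phi_AntiPoly[OF assms(2)]
    by (simp add: Dx_addA Dx_smulA lP_lincomb AntiPoly_Poly2)
qed

lemma comm_if_Phi_eq: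
  assumes "f \<in> F3rep" "g \<in> F3rep" "Phi f = Phi g"
  shows "subA f g \<in> comm"
proof -
  let ?h = "subA f g"
  have h: "?h \<in> Afin" "xhomog 3 ?h"
    using assms(1,2) by (auto simp: F3rep_Afin F3rep_xhomog xhomog_subA)
  have "Dx ?h = zeroA"
    using Phi_AntiPoly[OF assms(1)] Phi_AntiPoly[OF assms(2)] assms(3)
    unfolding Dx_subA by (simp add: subA_def zeroA_def)
  then have "smulA 3 ?h \<in> comm"
    using Euler_comm[OF h] unfolding \<open>Dx ?h = zeroA\<close> mulA_zero_right by (simp add: subA_def zeroA_def)
  then have "smulA (1 / 3) (smulA 3 ?h) \<in> comm"
    unfolding comm_def by (rule lspan_smul)
  then show ?thesis
    by (simp add: smulA_def)
qed

lemma PP_iff_cyclic: "P \<in> PP \<longleftrightarrow> P \<in> AntiPoly \<and> (\<forall>X Y. peval P X Y = peval P Y (- X - Y))"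
proof (cases "P \<in> AntiPoly")
  case True
  note swap = peval_swap_AntiPoly[OF True]
  have "peval P X Y = peval P Y (- X - Y)"
    if "\<forall>a b. 2 * peval P a b = peval P (- a - b) a - peval P (- a - b) b" for X Y
  proof -
    have "2 * peval P X Y = peval P (- X - Y) X + peval P Y (- X - Y)"
      using that swap[of "- X - Y" Y] by simp
    moreover have "2 * peval P Y (- X - Y) = peval P X Y + peval P (- X - Y) X"
      using that[rule_format, of Y "- X - Y"] swap[of X "- X - Y"] by simp
    ultimately show ?thesis by simp
  qed
  moreover have "2 * peval P a b = peval P (- a - b) a - peval P (- a - b) b"
    if "\<forall>X Y. peval P X Y = peval P Y (- X - Y)" for a b
    using that[rule_format, of "- a - b" a] that[rule_format, of a b] swap[of "- a - b" b] by simp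
  ultimately show ?thesis
    using True unfolding PP_def by blast
qed (simp add: PP_def)

lemma evalA_lP_rot:
  assumes "P \<in> AntiPoly"
  shows "evalA (lP P) (rot 3 1 t) = 2 * peval P (t 1 - t 2) (t 2 - t 0)"
  by (simp add: evalA_lP_AntiPoly[OF assms] rot_def numeral_2_eq_2)

lemma evalA_lP_rot_invariant_iff:
  assumes "P \<in> AntiPoly"
  shows "(\<forall>t. evalA (lP P) (rot 3 1 t) = evalA (lP P) t) \<longleftrightarrow> (\<forall>X Y. peval P X Y = peval P Y (- X - Y))"
proof
  assume rot: "\<forall>t. evalA (lP P) (rot 3 1 t) = evalA (lP P) t"
  show "\<forall>X Y. peval P X Y = peval P Y (- X - Y)"
  proof (intro allI)
    fix X Y :: real
    define t :: "nat \<Rightarrow> real" where "t m = (if m = 0 then X + Y else if m = 1 then Y else 0)" for m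
    have "evalA (lP P) (rot 3 1 t) = evalA (lP P) t" using rot by blast
    then have "2 * peval P (t 1 - t 2) (t 2 - t 0) = evalA (lP P) t"
      by (simp only: evalA_lP_rot[OF assms])
    then have "2 * peval P (t 1 - t 2) (t 2 - t 0) = 2 * peval P (t 0 - t 1) (t 1 - t 2)"
      by (simp only: evalA_lP_AntiPoly[OF assms])
    then show "peval P X Y = peval P Y (- X - Y)"
      by (simp add: t_def)
  qed
next
  assume cyc: "\<forall>X Y. peval P X Y = peval P Y (- X - Y)"
  show "\<forall>t. evalA (lP P) (rot 3 1 t) = evalA (lP P) t"
  proof
    fix t :: "nat \<Rightarrow> real"
    have "- (t 0 - t 1) - (t 1 - t 2) = t 2 - t 0" by simp
    then have "peval P (t 0 - t 1) (t 1 - t 2) = peval P (t 1 - t 2) (t 2 - t 0)"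
      using cyc by metis
    then show "evalA (lP P) (rot 3 1 t) = evalA (lP P) t"
      unfolding evalA_lP_rot[OF assms] by (simp only: evalA_lP_AntiPoly[OF assms])
  qed
qed

lemma Phi_PP:
  assumes "f \<in> F3rep"
  shows "Phi f \<in> PP"
proof -
  have "evalA (lP (Phi f)) (rot 3 1 t) = evalA (lP (Phi f)) t" for t
    using evalA_Dx_rot[OF F3rep_Afin[OF assms] F3rep_xhomog[OF assms]] Phi_AntiPoly[OF assms] by metis
  then show ?thesis
    using Phi_AntiPoly[OF assms] evalA_lP_rot_invariant_iff PP_iff_cyclic by blast
qed

lemma shift_rot: "shift 1 (rot n j t) = rot n (Suc j) t"
  by (simp add: shift_def rot_def)

lemma Dx_x_mulA:
  assumes "h \<in> Afin" "xhomog k h" "\<And>t. evalA h (rot (Suc k) 1 t) = evalA h t"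
  shows "Dx (mulA (genA LX) h) = smulA (Suc k) h"
proof -
  have inv: "evalA h (rot (Suc k) j t) = evalA h t" for j t
  proof (induction j)
    case (Suc j)
    then show ?case using assms(3)[of "rot (Suc k) j t"] by (simp add: rot_rot)
  qed (rule evalA_cong[OF assms(2)], simp add: rot_def)
  have xh: "mulA (genA LX) h \<in> Afin" "xhomog (Suc k) (mulA (genA LX) h)"
    using assms(1) xhomog_mulA[OF xhomog_x assms(2)] by auto
  show ?thesis
  proof (rule evalA_inject)
    show "xhomog k (Dx (mulA (genA LX) h))" by (rule xhomog_Dx[OF xh(2)])
    show "xhomog k (smulA (real (Suc k)) h)"
      using assms(2) by (simp add: xhomog_def smulA_def)
    show "evalA (Dx (mulA (genA LX) h)) t = evalA (smulA (real (Suc k)) h) t" for t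
    proof -
      have "evalA (Dx (mulA (genA LX) h)) t = (\<Sum>j<Suc k. evalA h (shift 1 (rot (Suc k) j t)))"
        unfolding evalA_Dx[OF xh] evalA_mulA[OF Afin_genA assms(1) xhomog_x] by simp
      also have "\<dots> = (\<Sum>j<Suc k. evalA h t)"
        unfolding shift_rot inv ..
      finally show ?thesis by (simp add: evalA_smulA)
    qed
  qed (use assms(1) xh in auto)
qed

lemma F3rep_x_mulA_lP:
  assumes "P \<in> Poly2"
  shows "smulA c (mulA (genA LX) (lP P)) \<in> F3rep"
proof -
  have "smulA c (mulA (genA LX) (lP P)) \<in> lie_products"
    using fl_x lP_freeLie[OF assms] by (blast intro: lspan_smul lspan_base)
  moreover have "xhomog 3 (smulA c (mulA (genA LX) (lP P)))"
    using xhomog_mulA[OF xhomog_x xhomog_lP, of P] by (simp add: xhomog_def smulA_def)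
  moreover have "subA f f \<in> comm" for f
    using zeroA_in_comm by (simp add: subA_def zeroA_def)
  ultimately show ?thesis
    using Afin_lP[OF assms] unfolding F3rep_def FLrep_def by blast
qed

lemma Phi_surj:
  assumes "P \<in> PP"
  shows "\<exists>f\<in>F3rep. Phi f = P"
proof -
  have P: "P \<in> AntiPoly" and cyc: "\<And>t. evalA (lP P) (rot 3 1 t) = evalA (lP P) t"
    using assms evalA_lP_rot_invariant_iff PP_iff_cyclic by blast+
  have Dx_x_lP: "Dx (mulA (genA LX) (lP P)) = smulA (Suc 2) (lP P)"
  proof (rule Dx_x_mulA[OF Afin_lP[OF AntiPoly_Poly2[OF P]] xhomog_lP])
    have "Suc 2 = (3 :: nat)" by simp
    then show "evalA (lP P) (rot (Suc 2) 1 t) = evalA (lP P) t" for t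
      using cyc by simp
  qed
  define f where "f = smulA (1 / 3) (mulA (genA LX) (lP P))"
  have "f \<in> F3rep"
    unfolding f_def by (rule F3rep_x_mulA_lP[OF AntiPoly_Poly2[OF P]])
  moreover have "Dx f = lP P"
    unfolding f_def Dx_smulA Dx_x_lP by (simp add: smulA_def)
  ultimately show ?thesis
    using Phi_eqI[OF _ P] by blast
qed

theorem mainTheorem8:
  shows "(\<forall>f\<in>F3rep. \<exists>!P. P \<in> AntiPoly \<and> Dx f = lP P)
       \<and> (\<forall>f\<in>F3rep. \<forall>g\<in>F3rep. subA f g \<in> comm \<longrightarrow> Phi f = Phi g)
       \<and> (\<forall>f\<in>F3rep. \<forall>g\<in>F3rep. \<forall>a b.
            addA (smulA a f) (smulA b g) \<in> F3rep
          \<and> Phi (addA (smulA a f) (smulA b g)) = (\<lambda>p. a * Phi f p + b * Phi g p))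
       \<and> (\<forall>f\<in>F3rep. Phi f \<in> PP)
       \<and> (\<forall>f\<in>F3rep. \<forall>g\<in>F3rep. Phi f = Phi g \<longrightarrow> subA f g \<in> comm)
       \<and> (\<forall>P\<in>PP. \<exists>f\<in>F3rep. Phi f = P)"
proof (intro conjI)
  show "\<forall>f\<in>F3rep. \<exists>!P. P \<in> AntiPoly \<and> Dx f = lP P"
    using F3rep_ex1_lP by blast
  show "\<forall>f\<in>F3rep. \<forall>g\<in>F3rep. subA f g \<in> comm \<longrightarrow> Phi f = Phi g"
    using Phi_eq_if_comm by blast
  show "\<forall>f\<in>F3rep. \<forall>g\<in>F3rep. \<forall>a b. addA (smulA a f) (smulA b g) \<in> F3rep
      \<and> Phi (addA (smulA a f) (smulA b g)) = (\<lambda>p. a * Phi f p + b * Phi g p)"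
    using F3rep_lincomb Phi_lincomb by blast
  show "\<forall>f\<in>F3rep. Phi f \<in> PP"
    using Phi_PP by blast
  show "\<forall>f\<in>F3rep. \<forall>g\<in>F3rep. Phi f = Phi g \<longrightarrow> subA f g \<in> comm"
    using comm_if_Phi_eq by blast
  show "\<forall>P\<in>PP. \<exists>f\<in>F3rep. Phi f = P"
    using Phi_surj by blast
qed

end
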